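(* Let $\Theta$ be a space of input histories satisfying the free-choice condition, and let $(\Theta'_k)_{k\in\max\mathrm{Ext}(\Theta)}$ be a family of spaces of input histories with $E^\Theta\cap E^{\Theta'_k}=\emptyset$ for all $k$. Assume that the families of input sets $(I^{\Theta'_k}_\omega)_{\omega\in E^{\Theta'_k}}$ are identical for all $k\in\max\mathrm{Ext}(\Theta)$ and that every $\Theta'_k$ satisfies the free-choice condition. Then $$\mathrm{CC}\big(\Theta\rightsquigarrow(\Theta'_k)_k\big)=\big\{\hat\Theta\rightsquigarrow(\hat\Theta'_k)_k:\ \hat\Theta\in\mathrm{CC}(\Theta),\ \hat\Theta'_k\in\mathrm{CC}(\Theta'_k)\text{ for all }k\in\max\mathrm{Ext}(\Theta)\big\}$$ (where the family $(\hat\Theta'_k)_k$ is indexed by $\max\mathrm{Ext}(\Theta)=\max\mathrm{Ext}(\hat\Theta)$).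
   Context: A partial function is a function $f$ with domain $\mathrm{dom}(f)$ a subset of an index set, values in given sets; ordered by restriction ($f\le g$ iff $\mathrm{dom}(f)\subseteq\mathrm{dom}(g)$, $g|_{\mathrm{dom}(f)}=f$). Compatible = agreeing on common domain; a compatible set $\mathcal F$ has join $\bigvee\mathcal F$ (union). $\Theta$ is $\vee$-prime if for compatible $\mathcal F\subseteq\Theta$ with $\bigvee\mathcal F\in\Theta$ we have $\bigvee\mathcal F\in\mathcal F$. A space of input histories is a finite $\vee$-prime set of partial functions; $E^\Theta=\bigcup_{h\in\Theta}\mathrm{dom}(h)$, $I^\Theta_\omega=\{h(\omega):h\in\Theta,\omega\in\mathrm{dom}(h)\}$, $\mathrm{Ext}(\Theta)=\{\bigvee\mathcal F:\emptyset\ne\mathcal F\subseteq\Theta\text{ compatible}\}$. Free-choice: maximal elements of $\mathrm{Ext}(\Theta)$ are exactly the total functions in $\prod_{\omega\in E^\Theta}I^\Theta_\omega$. $\mathrm{tips}_\Theta(h)=\mathrm{dom}(h)\setminus\bigcup\{\mathrm{dom}(k):k\in\mathrm{Ext}(\Theta),k<h\}$. Causally complete: free-choice and $|\mathrm{tips}_\Theta(h)|=1$ for all $h\in\Theta$. Order: $\Theta_1\le\Theta_2$ iff $\mathrm{Ext}(\Theta_1)\supseteq\mathrm{Ext}(\Theta_2)$. $\mathrm{CC}(\Theta)$ = maximal elements of $\{\Theta_1\le\Theta:\Theta_1\text{ causally complete}\}$. Conditional sequential composition: $\Theta\rightsquigarrow(\Theta'_k)_k=\Theta\cup\{k\vee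 h':k\in\max\mathrm{Ext}(\Theta),\ h'\in\Theta'_k\}$. *)

theory Defs
  imports Main
begin

text \<open>Partial functions from an index set of events 'e to values 'v are modelled
as maps 'e \<rightharpoonup> 'v; the order by restriction is map_le.\<close>

definition compatible :: "('e \<rightharpoonup> 'v) set \<Rightarrow> bool" where
  "compatible F \<longleftrightarrow> (\<forall>f\<in>F. \<forall>g\<in>F. \<forall>x\<in>dom f \<inter> dom g. f x = g x)"

definition pjoin :: "('e \<rightharpoonup> 'v) set \<Rightarrow> ('e \<rightharpoonup> 'v)" where
  "pjoin F = (\<lambda>x. if \<exists>f\<in>F. x \<in> dom f then (SOME f. f \<in> F \<and> x \<in> dom f) x else None)"

definition vee_prime :: "('e \<rightharpoonup> 'v) set \<Rightarrow> bool" where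
  "vee_prime \<Theta> \<longleftrightarrow> (\<forall>F. F \<subseteq> \<Theta> \<and> compatible F \<and> pjoin F \<in> \<Theta> \<longrightarrow> pjoin F \<in> F)"

definition space :: "('e \<rightharpoonup> 'v) set \<Rightarrow> bool" where
  "space \<Theta> \<longleftrightarrow> finite \<Theta> \<and> vee_prime \<Theta>"

definition events :: "('e \<rightharpoonup> 'v) set \<Rightarrow> 'e set" where
  "events \<Theta> = (\<Union>h\<in>\<Theta>. dom h)"

definition inputs :: "('e \<rightharpoonup> 'v) set \<Rightarrow> 'e \<Rightarrow> 'v set" where
  "inputs \<Theta> \<omega> = {v. \<exists>h\<in>\<Theta>. h \<omega> = Some v}"

definition Ext :: "('e \<rightharpoonup> 'v) set \<Rightarrow> ('e \<rightharpoonup> 'v) set" where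
  "Ext \<Theta> = {pjoin F | F. F \<noteq> {} \<and> F \<subseteq> \<Theta> \<and> compatible F}"

definition maxExt :: "('e \<rightharpoonup> 'v) set \<Rightarrow> ('e \<rightharpoonup> 'v) set" where
  "maxExt \<Theta> = {k \<in> Ext \<Theta>. \<forall>k'\<in>Ext \<Theta>. k \<subseteq>\<^sub>m k' \<longrightarrow> k' = k}"

definition free_choice :: "('e \<rightharpoonup> 'v) set \<Rightarrow> bool" where
  "free_choice \<Theta> \<longleftrightarrow>
     maxExt \<Theta> = {f. dom f = events \<Theta> \<and> (\<forall>\<omega>\<in>events \<Theta>. the (f \<omega>) \<in> inputs \<Theta> \<omega>)}"

definition tips :: "('e \<rightharpoonup> 'v) set \<Rightarrow> ('e \<rightharpoonup> 'v) \<Rightarrow> 'e set" where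
  "tips \<Theta> h = dom h - (\<Union>{dom k | k. k \<in> Ext \<Theta> \<and> k \<subseteq>\<^sub>m h \<and> k \<noteq> h})"

definition causally_complete :: "('e \<rightharpoonup> 'v) set \<Rightarrow> bool" where
  "causally_complete \<Theta> \<longleftrightarrow> free_choice \<Theta> \<and> (\<forall>h\<in>\<Theta>. card (tips \<Theta> h) = 1)"

definition space_le :: "('e \<rightharpoonup> 'v) set \<Rightarrow> ('e \<rightharpoonup> 'v) set \<Rightarrow> bool" where
  "space_le \<Theta>1 \<Theta>2 \<longleftrightarrow> Ext \<Theta>2 \<subseteq> Ext \<Theta>1"

definition CC :: "('e \<rightharpoonup> 'v) set \<Rightarrow> ('e \<rightharpoonup> 'v) set set" where
  "CC \<Theta> = (let S = {\<Theta>1. space \<Theta>1 \<and> space_le \<Theta>1 \<Theta> \<and> causally_complete \<Theta>1}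
            in {\<Theta>1 \<in> S. \<forall>\<Theta>2\<in>S. space_le \<Theta>1 \<Theta>2 \<longrightarrow> space_le \<Theta>2 \<Theta>1})"

text \<open>Conditional sequential composition; the family is a function on maxExt \<Theta>
 (values outside maxExt \<Theta> are irrelevant). The join k \<or> h' of two compatible
 partial functions is the join of the set {k, h'}.\<close>
definition cseq :: "('e \<rightharpoonup> 'v) set \<Rightarrow> (('e \<rightharpoonup> 'v) \<Rightarrow> ('e \<rightharpoonup> 'v) set) \<Rightarrow> ('e \<rightharpoonup> 'v) set" where
  "cseq \<Theta> \<Theta>' = \<Theta> \<union> {pjoin {k, h'} | k h'. k \<in> maxExt \<Theta> \<and> h' \<in> \<Theta>' k}"

end

theory Submission
  imports Defs
begin

text \<open>
  A space \<open>\<Theta>\<close> is determined by its join closure \<open>joins \<Theta>\<close> (that is, \<open>Ext \<Theta>\<close> with the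
  empty map): \<open>\<Theta>\<close> is recovered as its set of join-irreducible elements, \<open>space_le\<close> is reverse
  inclusion of join closures, and \<open>\<Theta>\<close> is causally complete iff \<open>joins \<Theta>\<close> is free-choice and
  accessible (every nonempty element can lose one point without leaving the family). Hence
  \<open>CC \<Theta>\<close> corresponds to the minimal finite, join-closed, accessible, free-choice families
  containing \<open>joins \<Theta>\<close>.

  The join closure of \<open>\<Theta> \<leadsto> (\<Theta>'\<^sub>k)\<^sub>k\<close> is obtained by grafting the families
  \<open>joins \<Theta>'\<^sub>k\<close> onto the maximal extensions \<open>k\<close> of \<open>\<Theta>\<close>. The roots \<open>k\<close> are total on the
  events of \<open>\<Theta>\<close> and the grafted parts avoid these events, so a minimal family for the
  composite splits into its part on the events of \<open>\<Theta>\<close> and its continuations above each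
  \<open>k\<close>; these are minimal for \<open>\<Theta>\<close> and for \<open>\<Theta>'\<^sub>k\<close>, and conversely grafting minimal families
  yields a minimal family.
\<close>

lemma map_le_map_add_left: "dom a \<inter> dom b = {} \<Longrightarrow> a \<subseteq>\<^sub>m a ++ b"
  by (metis map_add_comm map_le_map_add)

lemma map_le_empty_iff [simp]: "f \<subseteq>\<^sub>m Map.empty \<longleftrightarrow> f = Map.empty"
  using map_le_antisym map_le_empty by blast

lemma restrict_map_le: "m |` A \<subseteq>\<^sub>m m"
  unfolding map_le_def by simp

lemma map_le_restrict_map: "g \<subseteq>\<^sub>m f \<Longrightarrow> dom g \<subseteq> A \<Longrightarrow> g \<subseteq>\<^sub>m f |` A"
  unfolding map_le_def by auto

lemma map_le_dom_eq:
  assumes "g \<subseteq>\<^sub>m h" "dom h \<subseteq> dom g"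
  shows "g = h"
proof
  fix x
  show "g x = h x"
  proof (cases "x \<in> dom g")
    case True
    then show ?thesis
      using assms(1) unfolding map_le_def by blast
  next
    case False
    then show ?thesis
      using assms(2) by (metis domIff subsetD)
  qed
qed

lemma dom_psubset_if_map_le: "g \<subseteq>\<^sub>m h \<Longrightarrow> g \<noteq> h \<Longrightarrow> dom g \<subset> dom h"
  using map_le_dom_eq map_le_implies_dom_le by blast

lemma map_le_strict_trans: "b \<subseteq>\<^sub>m g \<Longrightarrow> g \<subseteq>\<^sub>m h \<Longrightarrow> g \<noteq> h \<Longrightarrow> b \<subseteq>\<^sub>m h \<and> b \<noteq> h"
  by (metis map_le_antisym map_le_trans)

lemma map_le_same_dom:
  assumes "k \<subseteq>\<^sub>m f" "k' \<subseteq>\<^sub>m f" "dom k = dom k'"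
  shows "k = k'"
proof
  fix x
  show "k x = k' x"
  proof (cases "x \<in> dom k")
    case True
    then have "k x = f x" "k' x = f x"
      using assms(1,2) True[unfolded assms(3)] unfolding map_le_def by blast+
    then show ?thesis
      by simp
  next
    case False
    then show ?thesis
      using assms(3) by (metis domIff)
  qed
qed

lemma map_le_fun_upd_None: "g \<subseteq>\<^sub>m f \<Longrightarrow> x \<notin> dom g \<Longrightarrow> g \<subseteq>\<^sub>m f(x := None)"
  unfolding map_le_def by auto

lemma map_le_of_map_add_left:
  assumes "f \<subseteq>\<^sub>m k ++ m" "dom f \<subseteq> dom k" "dom m \<inter> dom k = {}"
  shows "f \<subseteq>\<^sub>m k"
  unfolding map_le_def
proof
  fix a assume a: "a \<in> dom f"
  then have "f a = (k ++ m) a"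
    using assms(1) unfolding map_le_def by blast
  moreover have "m a = None"
    using a assms(2,3) by blast
  ultimately show "f a = k a"
    by (simp add: map_add_def)
qed

lemma map_le_of_map_add_right:
  assumes "g \<subseteq>\<^sub>m k ++ g'" "dom g \<inter> dom k = {}"
  shows "g \<subseteq>\<^sub>m g'"
  unfolding map_le_def
proof
  fix a assume a: "a \<in> dom g"
  then have "g a = (k ++ g') a"
    using assms(1) unfolding map_le_def by blast
  moreover have "k a = None"
    using a assms(2) by blast
  ultimately show "g a = g' a"
    by (simp add: map_add_def split: option.splits)
qed

lemma map_add_mono_right:
  assumes "g \<subseteq>\<^sub>m g'" "dom g' \<inter> dom k = {}"
  shows "k ++ g \<subseteq>\<^sub>m k ++ g'"
  unfolding map_le_def
proof
  fix a assume a: "a \<in> dom (k ++ g)"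
  show "(k ++ g) a = (k ++ g') a"
  proof (cases "g a")
    case None
    then have "a \<in> dom k"
      using a by auto
    then have "g' a = None"
      using assms(2) by auto
    then show ?thesis
      using None by (simp add: map_add_def)
  next
    case (Some y)
    then have "g' a = Some y"
      using assms(1) unfolding map_le_def by (metis domI)
    then show ?thesis
      using Some by (simp add: map_add_def)
  qed
qed

lemma map_add_upd_None: "x \<notin> dom k \<Longrightarrow> (k ++ g)(x := None) = k ++ g(x := None)"
  by (rule ext) (auto simp: map_add_def domIff split: option.splits)

lemma map_add_restrict_compl:
  assumes "k \<subseteq>\<^sub>m f" "dom k = E"
  shows "k ++ f |` (- E) = f"
proof
  fix x
  show "(k ++ f |` (- E)) x = f x"
  proof (cases "x \<in> E")
    case True
    then have "k x = f x"
      using assms unfolding map_le_def by blast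
    then show ?thesis
      using True by (simp add: map_add_def)
  next
    case False
    then have "k x = None"
      using assms(2) by blast
    then show ?thesis
      using False by (simp add: map_add_def split: option.splits)
  qed
qed

lemma restrict_compl_map_add:
  assumes "dom k = E" "dom g \<inter> E = {}"
  shows "(k ++ g) |` (- E) = g"
proof
  fix x
  show "((k ++ g) |` (- E)) x = g x"
  proof (cases "x \<in> E")
    case True
    then have "g x = None"
      using assms(2) by blast
    then show ?thesis
      using True by simp
  next
    case False
    then have "k x = None"
      using assms(1) by blast
    then show ?thesis
      using False by (simp add: map_add_def split: option.splits)
  qed
qed

lemma empty_if_dom_disjoint_subset: "dom g \<subseteq> E \<Longrightarrow> dom g \<inter> E = {} \<Longrightarrow> g = Map.empty"
  by auto

lemma compatible_if_map_le: "(\<And>g. g \<in> F \<Longrightarrow> g \<subseteq>\<^sub>m f) \<Longrightarrow> compatible F"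
  unfolding compatible_def map_le_def by (metis IntD1 IntD2)

lemma pjoin_apply:
  assumes "compatible F" "g \<in> F" "x \<in> dom g"
  shows "pjoin F x = g x"
proof -
  let ?f = "SOME f. f \<in> F \<and> x \<in> dom f"
  have "?f \<in> F \<and> x \<in> dom ?f"
    using assms(2,3) by (intro someI[of "\<lambda>f. f \<in> F \<and> x \<in> dom f"]) blast
  then show ?thesis
    using assms unfolding pjoin_def compatible_def by auto
qed

lemma dom_pjoin: "dom (pjoin F) = (\<Union>f\<in>F. dom f)"
proof (intro equalityI subsetI)
  fix x assume "x \<in> dom (pjoin F)"
  then show "x \<in> (\<Union>f\<in>F. dom f)"
    unfolding pjoin_def by (auto split: if_splits)
next
  fix x assume "x \<in> (\<Union>f\<in>F. dom f)"
  then obtain g where g: "g \<in> F" "x \<in> dom g" by blast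
  let ?f = "SOME f. f \<in> F \<and> x \<in> dom f"
  have "?f \<in> F \<and> x \<in> dom ?f"
    using g by (intro someI[of "\<lambda>f. f \<in> F \<and> x \<in> dom f"]) blast
  moreover have "pjoin F x = ?f x"
    unfolding pjoin_def using g by auto
  ultimately show "x \<in> dom (pjoin F)"
    by auto
qed

lemma map_le_pjoin: "compatible F \<Longrightarrow> g \<in> F \<Longrightarrow> g \<subseteq>\<^sub>m pjoin F"
  unfolding map_le_def using pjoin_apply by metis

lemma pjoin_eqI:
  assumes "\<And>g. g \<in> F \<Longrightarrow> g \<subseteq>\<^sub>m f" and "dom f \<subseteq> (\<Union>g\<in>F. dom g)"
  shows "pjoin F = f"
proof
  fix x
  show "pjoin F x = f x"
  proof (cases "x \<in> (\<Union>g\<in>F. dom g)")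
    case True
    then obtain g where g: "g \<in> F" "x \<in> dom g" by blast
    then have "pjoin F x = g x"
      using pjoin_apply compatible_if_map_le assms(1) by metis
    also have "\<dots> = f x"
      using assms(1)[OF g(1)] g(2) unfolding map_le_def by blast
    finally show ?thesis .
  next
    case False
    then show ?thesis
      using assms(2) dom_pjoin by (metis domIff subsetD)
  qed
qed

lemma pjoin_pair_disjoint: "dom a \<inter> dom b = {} \<Longrightarrow> pjoin {a, b} = a ++ b"
  by (rule pjoin_eqI) (auto simp: map_le_map_add_left)

section \<open>Covering and the join closure\<close>

definition covers :: "('e \<rightharpoonup> 'v) set \<Rightarrow> ('e \<rightharpoonup> 'v) \<Rightarrow> bool" where
  "covers A f \<longleftrightarrow> (\<forall>x\<in>dom f. \<exists>h\<in>A. h \<subseteq>\<^sub>m f \<and> x \<in> dom h)"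

text \<open>The join closure \<open>joins A\<close> is \<open>Ext A\<close> together with the empty map
  (lemma \<open>joins_eq_insert_Ext\<close>); describing it by coverings avoids the choice hidden in \<open>pjoin\<close>.\<close>

definition joins :: "('e \<rightharpoonup> 'v) set \<Rightarrow> ('e \<rightharpoonup> 'v) set" where
  "joins A = {f. covers A f}"

definition join_closed :: "('e \<rightharpoonup> 'v) set \<Rightarrow> bool" where
  "join_closed F \<longleftrightarrow> joins F \<subseteq> F"

lemma coversI: "(\<And>x. x \<in> dom f \<Longrightarrow> \<exists>h\<in>A. h \<subseteq>\<^sub>m f \<and> x \<in> dom h) \<Longrightarrow> covers A f"
  unfolding covers_def by simp

lemma coversE:
  assumes "covers A f" "x \<in> dom f"
  obtains h where "h \<in> A" "h \<subseteq>\<^sub>m f" "x \<in> dom h"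
  using assms unfolding covers_def by blast

lemma not_coversE:
  assumes "\<not> covers A f"
  obtains x where "x \<in> dom f" "\<forall>h\<in>A. h \<subseteq>\<^sub>m f \<longrightarrow> x \<notin> dom h"
  using assms unfolding covers_def by auto

lemma covers_mono: "covers A f \<Longrightarrow> A \<subseteq> B \<Longrightarrow> covers B f"
  unfolding covers_def by (meson subsetD)

lemma covers_below: "covers A f \<Longrightarrow> covers {h \<in> A. h \<subseteq>\<^sub>m f} f"
  unfolding covers_def by (metis (no_types, lifting) mem_Collect_eq)

lemma covers_member: "h \<in> A \<Longrightarrow> covers A h"
  unfolding covers_def using map_le_refl by (intro ballI bexI conjI)

lemma covers_empty [simp]: "covers A Map.empty"
  unfolding covers_def by simp

lemma covers_trans:
  assumes "covers A f" and "\<And>g. g \<in> A \<Longrightarrow> g \<subseteq>\<^sub>m f \<Longrightarrow> covers B g"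
  shows "covers B f"
proof (rule coversI)
  fix x assume "x \<in> dom f"
  then obtain g where g: "g \<in> A" "g \<subseteq>\<^sub>m f" "x \<in> dom g"
    by (rule coversE[OF assms(1)])
  then obtain b where "b \<in> B" "b \<subseteq>\<^sub>m g" "x \<in> dom b"
    using coversE[OF assms(2)[OF g(1,2)] g(3)] by blast
  then show "\<exists>b\<in>B. b \<subseteq>\<^sub>m f \<and> x \<in> dom b"
    using g(2) map_le_trans by blast
qed

lemma dom_subset_events_if_covers: "covers A f \<Longrightarrow> dom f \<subseteq> events A"
  unfolding covers_def events_def by blast

lemma dom_subset_if_covers: "covers A f \<Longrightarrow> (\<And>h. h \<in> A \<Longrightarrow> dom h \<subseteq> E) \<Longrightarrow> dom f \<subseteq> E"
  unfolding covers_def by blast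

lemma covers_disjoint:
  "covers A f \<Longrightarrow> (\<And>h. h \<in> A \<Longrightarrow> dom h \<inter> E = {}) \<Longrightarrow> dom f \<inter> E = {}"
  unfolding covers_def by blast

lemma subset_joins: "A \<subseteq> joins A"
  unfolding joins_def using covers_member by blast

lemma empty_in_joins [simp]: "Map.empty \<in> joins A"
  unfolding joins_def by simp

lemma joins_mono: "A \<subseteq> B \<Longrightarrow> joins A \<subseteq> joins B"
  unfolding joins_def using covers_mono by blast

lemma join_closedI: "(\<And>f. covers F f \<Longrightarrow> f \<in> F) \<Longrightarrow> join_closed F"
  unfolding join_closed_def joins_def by blast

lemma join_closedD: "join_closed F \<Longrightarrow> covers F f \<Longrightarrow> f \<in> F"
  unfolding join_closed_def joins_def by blast

lemma join_closed_joins: "join_closed (joins A)"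
  unfolding join_closed_def joins_def by (auto intro: covers_trans)

lemma joins_subset_if_join_closed: "A \<subseteq> F \<Longrightarrow> join_closed F \<Longrightarrow> joins A \<subseteq> F"
  using joins_mono unfolding join_closed_def by blast

lemma join_closed_empty: "join_closed F \<Longrightarrow> Map.empty \<in> F"
  using join_closedD covers_empty by blast

lemma events_joins: "events (joins A) = events A"
proof
  show "events (joins A) \<subseteq> events A"
  proof
    fix x assume "x \<in> events (joins A)"
    then obtain f where "covers A f" "x \<in> dom f"
      unfolding events_def joins_def by blast
    then show "x \<in> events A"
      using dom_subset_events_if_covers by blast
  qed
  show "events A \<subseteq> events (joins A)"
    unfolding events_def using subset_joins by (rule UN_mono) simp
qed

lemma inputs_joins: "inputs (joins A) = inputs A"
proof (intro ext set_eqI iffI)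
  fix \<omega> v assume "v \<in> inputs (joins A) \<omega>"
  then obtain f where f: "covers A f" "f \<omega> = Some v"
    unfolding inputs_def joins_def by blast
  moreover have "\<omega> \<in> dom f"
    using f(2) by (rule domI)
  ultimately obtain h where "h \<in> A" "h \<subseteq>\<^sub>m f" "\<omega> \<in> dom h"
    using coversE by metis
  with f(2) have "h \<in> A" "h \<omega> = Some v"
    unfolding map_le_def by auto
  then show "v \<in> inputs A \<omega>"
    unfolding inputs_def by blast
next
  fix \<omega> v assume "v \<in> inputs A \<omega>"
  then show "v \<in> inputs (joins A) \<omega>"
    using subset_joins unfolding inputs_def by blast
qed

lemma joins_eq_insert_Ext: "joins A = insert Map.empty (Ext A)"
proof (intro equalityI subsetI)
  fix f assume f: "f \<in> joins A"
  show "f \<in> insert Map.empty (Ext A)"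
  proof (cases "f = Map.empty")
    case False
    let ?F = "{h \<in> A. h \<subseteq>\<^sub>m f}"
    have below: "\<And>g. g \<in> ?F \<Longrightarrow> g \<subseteq>\<^sub>m f" by simp
    have cov: "dom f \<subseteq> (\<Union>g\<in>?F. dom g)"
      using f unfolding joins_def covers_def by blast
    obtain x where "x \<in> dom f"
      using False by fastforce
    then have "?F \<noteq> {}"
      using cov by blast
    then have "pjoin ?F \<in> Ext A"
      unfolding Ext_def using compatible_if_map_le[OF below] by blast
    then show ?thesis
      using pjoin_eqI[OF below cov] by simp
  qed simp
next
  fix f assume "f \<in> insert Map.empty (Ext A)"
  then consider "f = Map.empty" | F where "f = pjoin F" "F \<subseteq> A" "compatible F"
    unfolding Ext_def by blast
  then show "f \<in> joins A"
  proof cases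
    case 2
    show ?thesis
      unfolding joins_def
    proof (intro CollectI coversI)
      fix x assume "x \<in> dom f"
      then obtain g where "g \<in> F" "x \<in> dom g"
        unfolding 2(1) dom_pjoin by blast
      moreover have "g \<subseteq>\<^sub>m f" if "g \<in> F" for g
        using 2 map_le_pjoin that by simp
      ultimately show "\<exists>h\<in>A. h \<subseteq>\<^sub>m f \<and> x \<in> dom h"
        using 2(2) by blast
    qed
  qed simp
qed

lemma empty_notin_Ext: "Map.empty \<notin> A \<Longrightarrow> Map.empty \<notin> Ext A"
proof
  assume "Map.empty \<notin> A" "Map.empty \<in> Ext A"
  then obtain F g where "Map.empty = pjoin F" "g \<in> F" "F \<subseteq> A" "compatible F" "g \<noteq> Map.empty"
    unfolding Ext_def by blast
  then show False
    using map_le_pjoin map_le_empty map_le_antisym by metis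
qed

lemma Ext_eq_joins: "Map.empty \<notin> A \<Longrightarrow> Ext A = joins A - {Map.empty}"
  using joins_eq_insert_Ext empty_notin_Ext by fastforce

lemma finite_joins:
  assumes "finite A"
  shows "finite (joins A)"
proof -
  have "finite (pjoin ` Pow A)"
    using assms by simp
  moreover have "Ext A \<subseteq> pjoin ` Pow A"
    unfolding Ext_def by blast
  ultimately show ?thesis
    unfolding joins_eq_insert_Ext using finite_subset by blast
qed

section \<open>Join-irreducible elements\<close>

definition strictly_below :: "('e \<rightharpoonup> 'v) set \<Rightarrow> ('e \<rightharpoonup> 'v) \<Rightarrow> ('e \<rightharpoonup> 'v) set" where
  "strictly_below F h = {g \<in> F. g \<subseteq>\<^sub>m h \<and> g \<noteq> h}"

definition join_irreducibles :: "('e \<rightharpoonup> 'v) set \<Rightarrow> ('e \<rightharpoonup> 'v) set" where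
  "join_irreducibles F = {h \<in> F. \<not> covers (strictly_below F h) h}"

lemma not_covers_strictly_below:
  assumes "vee_prime \<Theta>" "h \<in> \<Theta>"
  shows "\<not> covers (strictly_below \<Theta> h) h"
proof
  assume cov: "covers (strictly_below \<Theta> h) h"
  let ?F = "strictly_below \<Theta> h"
  have below: "\<And>g. g \<in> ?F \<Longrightarrow> g \<subseteq>\<^sub>m h"
    unfolding strictly_below_def by simp
  have "dom h \<subseteq> (\<Union>g\<in>?F. dom g)"
    using cov unfolding covers_def by blast
  then have "pjoin ?F = h"
    using below by (rule pjoin_eqI[rotated])
  moreover have "?F \<subseteq> \<Theta>"
    unfolding strictly_below_def by blast
  ultimately have "pjoin ?F \<in> ?F"
    using assms compatible_if_map_le[OF below] unfolding vee_prime_def by auto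
  then show False
    using \<open>pjoin ?F = h\<close> unfolding strictly_below_def by simp
qed

lemma vee_primeI:
  assumes "\<And>h. h \<in> \<Theta> \<Longrightarrow> \<not> covers (strictly_below \<Theta> h) h"
  shows "vee_prime \<Theta>"
  unfolding vee_prime_def
proof (intro allI impI, elim conjE)
  fix F assume F: "F \<subseteq> \<Theta>" "compatible F" "pjoin F \<in> \<Theta>"
  show "pjoin F \<in> F"
  proof (rule ccontr)
    assume "pjoin F \<notin> F"
    then have "F \<subseteq> strictly_below \<Theta> (pjoin F)"
      unfolding strictly_below_def using F(1,2) map_le_pjoin by blast
    moreover have "covers F (pjoin F)"
    proof (rule coversI)
      fix x assume "x \<in> dom (pjoin F)"
      then obtain g where "g \<in> F" "x \<in> dom g"
        unfolding dom_pjoin by blast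
      then show "\<exists>g\<in>F. g \<subseteq>\<^sub>m pjoin F \<and> x \<in> dom g"
        using map_le_pjoin[OF F(2)] by blast
    qed
    ultimately show False
      using assms[OF F(3)] covers_mono by blast
  qed
qed

lemma empty_notin_if_vee_prime: "vee_prime \<Theta> \<Longrightarrow> Map.empty \<notin> \<Theta>"
  using not_covers_strictly_below covers_empty by blast

lemma empty_notin_if_space: "space \<Theta> \<Longrightarrow> Map.empty \<notin> \<Theta>"
  unfolding space_def using empty_notin_if_vee_prime by blast

lemma join_irreducibles_joins:
  assumes "vee_prime \<Theta>"
  shows "join_irreducibles (joins \<Theta>) = \<Theta>"
proof
  show "\<Theta> \<subseteq> join_irreducibles (joins \<Theta>)"
  proof
    fix h assume h: "h \<in> \<Theta>"
    have "\<not> covers (strictly_below (joins \<Theta>) h) h"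
    proof
      assume "covers (strictly_below (joins \<Theta>) h) h"
      then have "covers (strictly_below \<Theta> h) h"
      proof (rule covers_trans)
        fix g assume g: "g \<in> strictly_below (joins \<Theta>) h"
        then have "covers {b \<in> \<Theta>. b \<subseteq>\<^sub>m g} g"
          unfolding strictly_below_def joins_def using covers_below by blast
        moreover have "{b \<in> \<Theta>. b \<subseteq>\<^sub>m g} \<subseteq> strictly_below \<Theta> h"
          using g map_le_strict_trans unfolding strictly_below_def by blast
        ultimately show "covers (strictly_below \<Theta> h) g"
          by (rule covers_mono)
      qed
      then show False
        using not_covers_strictly_below[OF assms h] by blast
    qed
    then show "h \<in> join_irreducibles (joins \<Theta>)"
      unfolding join_irreducibles_def using h subset_joins by blast
  qed
  show "join_irreducibles (joins \<Theta>) \<subseteq> \<Theta>"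
  proof
    fix h assume "h \<in> join_irreducibles (joins \<Theta>)"
    then have cov: "covers \<Theta> h" and irr: "\<not> covers (strictly_below (joins \<Theta>) h) h"
      unfolding join_irreducibles_def joins_def by auto
    obtain x where x: "x \<in> dom h" "\<forall>g\<in>strictly_below (joins \<Theta>) h. g \<subseteq>\<^sub>m h \<longrightarrow> x \<notin> dom g"
      using irr by (rule not_coversE)
    obtain g where g: "g \<in> \<Theta>" "g \<subseteq>\<^sub>m h" "x \<in> dom g"
      using coversE[OF cov x(1)] by blast
    then have "g \<notin> strictly_below (joins \<Theta>) h"
      using x(2) by blast
    then have "g = h"
      using g subset_joins unfolding strictly_below_def by blast
    then show "h \<in> \<Theta>"
      using g(1) by simp
  qed
qed

lemma card_strictly_below_less:
  assumes "finite F" "g \<in> strictly_below F f"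
  shows "card (strictly_below F g) < card (strictly_below F f)"
proof (rule psubset_card_mono)
  show "finite (strictly_below F f)"
    using assms(1) unfolding strictly_below_def by simp
  have "strictly_below F g \<subseteq> strictly_below F f"
    using assms(2) map_le_strict_trans unfolding strictly_below_def by blast
  moreover have "g \<notin> strictly_below F g"
    unfolding strictly_below_def by simp
  ultimately show "strictly_below F g \<subset> strictly_below F f"
    using assms(2) by blast
qed

lemma covers_join_irreducibles:
  assumes "finite F" "join_closed F" "f \<in> F"
  shows "covers (join_irreducibles F) f"
  using assms(3)
proof (induction f rule: measure_induct_rule[of "\<lambda>f. card (strictly_below F f)"])
  case (less f)
  show ?case
  proof (cases "f \<in> join_irreducibles F")
    case False
    then have "covers (strictly_below F f) f"
      using less.prems unfolding join_irreducibles_def by blast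
    then show ?thesis
    proof (rule covers_trans)
      fix g assume g: "g \<in> strictly_below F f"
      then show "covers (join_irreducibles F) g"
        using less.IH[OF card_strictly_below_less[OF assms(1) g]] unfolding strictly_below_def by blast
    qed
  qed (rule covers_member)
qed

lemma joins_join_irreducibles:
  assumes "finite F" "join_closed F"
  shows "joins (join_irreducibles F) = F"
proof
  have "join_irreducibles F \<subseteq> F"
    unfolding join_irreducibles_def by blast
  then show "joins (join_irreducibles F) \<subseteq> F"
    using assms(2) by (rule joins_subset_if_join_closed)
  show "F \<subseteq> joins (join_irreducibles F)"
    unfolding joins_def using covers_join_irreducibles[OF assms] by blast
qed

lemma space_join_irreducibles:
  assumes "finite F"
  shows "space (join_irreducibles F)"
  unfolding space_def
proof
  show "finite (join_irreducibles F)"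
    using assms unfolding join_irreducibles_def by simp
  show "vee_prime (join_irreducibles F)"
  proof (rule vee_primeI)
    fix h assume "h \<in> join_irreducibles F"
    moreover have "strictly_below (join_irreducibles F) h \<subseteq> strictly_below F h"
      unfolding strictly_below_def join_irreducibles_def by blast
    ultimately show "\<not> covers (strictly_below (join_irreducibles F) h) h"
      unfolding join_irreducibles_def using covers_mono by blast
  qed
qed

lemma space_eq_if_joins_eq: "space A \<Longrightarrow> space B \<Longrightarrow> joins A = joins B \<Longrightarrow> A = B"
  using join_irreducibles_joins unfolding space_def by metis

section \<open>Causal completeness as accessibility\<close>

definition accessible :: "('e \<rightharpoonup> 'v) set \<Rightarrow> bool" where
  "accessible F \<longleftrightarrow> (\<forall>f\<in>F. f \<noteq> Map.empty \<longrightarrow> (\<exists>x\<in>dom f. f(x := None) \<in> F))"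

lemma tips_eq: "tips \<Theta> h = dom h - (\<Union>g\<in>strictly_below \<Theta> h. dom g)"
proof -
  have "\<Union>{dom k |k. k \<in> Ext \<Theta> \<and> k \<subseteq>\<^sub>m h \<and> k \<noteq> h} = (\<Union>g\<in>strictly_below \<Theta> h. dom g)"
  proof (intro equalityI subsetI)
    fix x assume "x \<in> \<Union>{dom k |k. k \<in> Ext \<Theta> \<and> k \<subseteq>\<^sub>m h \<and> k \<noteq> h}"
    then obtain k where k: "k \<in> Ext \<Theta>" "k \<subseteq>\<^sub>m h" "k \<noteq> h" "x \<in> dom k"
      by blast
    then have "covers \<Theta> k"
      using joins_eq_insert_Ext unfolding joins_def by blast
    then obtain g where "g \<in> \<Theta>" "g \<subseteq>\<^sub>m k" "x \<in> dom g"
      using k(4) by (rule coversE)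
    then show "x \<in> (\<Union>g\<in>strictly_below \<Theta> h. dom g)"
      using k(2,3) map_le_strict_trans unfolding strictly_below_def by blast
  next
    fix x assume "x \<in> (\<Union>g\<in>strictly_below \<Theta> h. dom g)"
    then obtain g where g: "g \<in> \<Theta>" "g \<subseteq>\<^sub>m h" "g \<noteq> h" "x \<in> dom g"
      unfolding strictly_below_def by blast
    then have "g \<in> insert Map.empty (Ext \<Theta>)" "g \<noteq> Map.empty"
      using subset_joins joins_eq_insert_Ext by auto
    then show "x \<in> \<Union>{dom k |k. k \<in> Ext \<Theta> \<and> k \<subseteq>\<^sub>m h \<and> k \<noteq> h}"
      using g by blast
  qed
  then show ?thesis
    unfolding tips_def by simp
qed

lemma card_tips_if_accessible:
  assumes "vee_prime \<Theta>" "accessible (joins \<Theta>)" "h \<in> \<Theta>"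
  shows "card (tips \<Theta> h) = 1"
proof -
  have "h \<noteq> Map.empty" "h \<in> joins \<Theta>"
    using empty_notin_if_vee_prime[OF assms(1)] assms(3) subset_joins by auto
  then obtain x where x: "x \<in> dom h" "h(x := None) \<in> joins \<Theta>"
    using assms(2) unfolding accessible_def by blast
  have "tips \<Theta> h \<subseteq> {x}"
  proof
    fix y assume y: "y \<in> tips \<Theta> h"
    show "y \<in> {x}"
    proof (rule ccontr)
      assume "y \<notin> {x}"
      then have "y \<in> dom (h(x := None))"
        using y unfolding tips_eq by simp
      moreover have "covers \<Theta> (h(x := None))"
        using x(2) unfolding joins_def by simp
      ultimately obtain g where g: "g \<in> \<Theta>" "g \<subseteq>\<^sub>m h(x := None)" "y \<in> dom g"
        using coversE by metis
      have "h(x := None) \<subseteq>\<^sub>m h"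
        unfolding map_le_def by simp
      then have "g \<in> strictly_below \<Theta> h"
        using g x(1) map_le_implies_dom_le[OF g(2)] map_le_trans
        unfolding strictly_below_def by fastforce
      then show False
        using y g(3) unfolding tips_eq by blast
    qed
  qed
  moreover have "tips \<Theta> h \<noteq> {}"
  proof
    assume no_tips: "tips \<Theta> h = {}"
    have "covers (strictly_below \<Theta> h) h"
    proof (rule coversI)
      fix y assume "y \<in> dom h"
      then obtain g where "g \<in> strictly_below \<Theta> h" "y \<in> dom g"
        using no_tips unfolding tips_eq by blast
      then show "\<exists>g\<in>strictly_below \<Theta> h. g \<subseteq>\<^sub>m h \<and> y \<in> dom g"
        unfolding strictly_below_def by blast
    qed
    then show False
      using not_covers_strictly_below[OF assms(1,3)] by blast
  qed
  ultimately have "tips \<Theta> h = {x}"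
    by blast
  then show ?thesis
    by simp
qed

lemma finite_dom_if_card_tips:
  assumes "finite \<Theta>" "\<forall>h\<in>\<Theta>. card (tips \<Theta> h) = 1" "h \<in> \<Theta>"
  shows "finite (dom h)"
  using assms(3)
proof (induction h rule: measure_induct_rule[of "\<lambda>h. card (strictly_below \<Theta> h)"])
  case (less h)
  have "finite (tips \<Theta> h)"
    using assms(2) less.prems by (metis card.infinite zero_neq_one)
  moreover have "finite (dom g)" if "g \<in> strictly_below \<Theta> h" for g
    using less.IH[OF card_strictly_below_less[OF assms(1) that]] that
    unfolding strictly_below_def by blast
  moreover have "finite (strictly_below \<Theta> h)"
    using assms(1) unfolding strictly_below_def by simp
  moreover have "dom h \<subseteq> tips \<Theta> h \<union> (\<Union>g\<in>strictly_below \<Theta> h. dom g)"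
    unfolding tips_eq by blast
  ultimately show ?case
    by (meson finite_UN_I finite_Un finite_subset)
qed

lemma covers_not_below:
  assumes "covers \<Theta> f" "f0 \<subseteq>\<^sub>m f" "f0 \<noteq> f"
  shows "\<exists>h\<in>\<Theta>. h \<subseteq>\<^sub>m f \<and> \<not> h \<subseteq>\<^sub>m f0"
proof (rule ccontr)
  assume none: "\<not> (\<exists>h\<in>\<Theta>. h \<subseteq>\<^sub>m f \<and> \<not> h \<subseteq>\<^sub>m f0)"
  have "dom f \<subseteq> dom f0"
  proof
    fix y assume "y \<in> dom f"
    with assms(1) obtain h where "h \<in> \<Theta>" "h \<subseteq>\<^sub>m f" "y \<in> dom h"
      by (rule coversE)
    moreover from this have "h \<subseteq>\<^sub>m f0"
      using none by blast
    ultimately show "y \<in> dom f0"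
      using map_le_implies_dom_le by blast
  qed
  then show False
    using assms(2,3) map_le_dom_eq by blast
qed

text \<open>A history of minimal size among those below \<open>f\<close> but not below \<open>f0\<close> has all its
  non-tip points in \<open>f0\<close>, since they are covered by strictly smaller histories.\<close>

lemma history_with_one_new_point:
  assumes fin: "finite \<Theta>" and cc: "\<forall>h\<in>\<Theta>. card (tips \<Theta> h) = 1"
    and f: "covers \<Theta> f" and f0: "f0 \<subseteq>\<^sub>m f" "f0 \<noteq> f"
  obtains h t where "h \<in> \<Theta>" "h \<subseteq>\<^sub>m f" "t \<in> dom h" "t \<notin> dom f0" "dom h \<subseteq> insert t (dom f0)"
proof -
  define B where "B = {h \<in> \<Theta>. h \<subseteq>\<^sub>m f \<and> \<not> h \<subseteq>\<^sub>m f0}"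
  have "B \<noteq> {}"
    using covers_not_below[OF f f0] unfolding B_def by blast
  then obtain h where "h \<in> B" and h_min: "\<forall>h'\<in>B. card (dom h) \<le> card (dom h')"
    using ex_has_least_nat[of "\<lambda>h. h \<in> B" _ "\<lambda>h. card (dom h)"] by blast
  then have h: "h \<in> \<Theta>" "h \<subseteq>\<^sub>m f" "\<not> h \<subseteq>\<^sub>m f0"
    unfolding B_def by auto
  obtain t where t: "tips \<Theta> h = {t}"
    using cc h(1) card_1_singletonE by blast
  have other_points: "dom h \<subseteq> insert t (dom f0)"
  proof
    fix y assume y: "y \<in> dom h"
    show "y \<in> insert t (dom f0)"
    proof (cases "y = t")
      case False
      then obtain g where g: "g \<in> strictly_below \<Theta> h" "y \<in> dom g"
        using y t unfolding tips_eq by blast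
      have "dom g \<subset> dom h"
        using g(1) dom_psubset_if_map_le unfolding strictly_below_def by blast
      then have "card (dom g) < card (dom h)"
        using finite_dom_if_card_tips[OF fin cc h(1)] psubset_card_mono by blast
      then have "g \<notin> B"
        using h_min by fastforce
      then have "g \<subseteq>\<^sub>m f0"
        using g(1) h(2) map_le_trans unfolding B_def strictly_below_def by blast
      then show ?thesis
        using g(2) map_le_implies_dom_le by blast
    qed simp
  qed
  have "t \<in> dom h"
    using t unfolding tips_eq by blast
  moreover have "t \<notin> dom f0"
  proof
    assume "t \<in> dom f0"
    then have "h \<subseteq>\<^sub>m f0"
      using other_points h(2) f0(1) unfolding map_le_def by (metis insert_absorb subsetD)
    then show False
      using h(3) by simp
  qed
  ultimately show ?thesis
    using that h(1,2) other_points by blast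
qed

lemma joins_augment:
  assumes fin: "finite \<Theta>" and cc: "\<forall>h\<in>\<Theta>. card (tips \<Theta> h) = 1"
    and f: "f \<in> joins \<Theta>" and f0: "f0 \<in> joins \<Theta>" "f0 \<subseteq>\<^sub>m f" "f0 \<noteq> f"
  obtains t where "t \<in> dom f" "t \<notin> dom f0" "f |` insert t (dom f0) \<in> joins \<Theta>"
proof -
  have "covers \<Theta> f"
    using f unfolding joins_def by simp
  then obtain h t where h: "h \<in> \<Theta>" "h \<subseteq>\<^sub>m f" "t \<in> dom h" "t \<notin> dom f0" "dom h \<subseteq> insert t (dom f0)"
    using history_with_one_new_point[OF fin cc _ f0(2,3)] by blast
  let ?f1 = "f |` insert t (dom f0)"
  have h_f1: "h \<subseteq>\<^sub>m ?f1"
    using h(2,5) by (rule map_le_restrict_map)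
  have f0_f1: "f0 \<subseteq>\<^sub>m ?f1"
    using f0(2) by (rule map_le_restrict_map) blast
  have "covers \<Theta> ?f1"
  proof (rule coversI)
    fix y assume "y \<in> dom ?f1"
    then consider "y = t" | "y \<in> dom f0"
      by auto
    then show "\<exists>g\<in>\<Theta>. g \<subseteq>\<^sub>m ?f1 \<and> y \<in> dom g"
    proof cases
      case 1
      then show ?thesis
        using h(1,3) h_f1 by blast
    next
      case 2
      moreover have "covers \<Theta> f0"
        using f0(1) unfolding joins_def by simp
      ultimately obtain g where "g \<in> \<Theta>" "g \<subseteq>\<^sub>m f0" "y \<in> dom g"
        using coversE by metis
      then show ?thesis
        using f0_f1 map_le_trans by blast
    qed
  qed
  moreover have "t \<in> dom f"
    using h(2,3) map_le_implies_dom_le by blast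
  ultimately show ?thesis
    using that h(4) unfolding joins_def by blast
qed

lemma finite_events_if_card_tips:
  assumes "finite \<Theta>" "\<forall>h\<in>\<Theta>. card (tips \<Theta> h) = 1"
  shows "finite (events \<Theta>)"
  unfolding events_def using assms finite_dom_if_card_tips by blast

lemma accessible_joins:
  assumes fin: "finite \<Theta>" and cc: "\<forall>h\<in>\<Theta>. card (tips \<Theta> h) = 1"
  shows "accessible (joins \<Theta>)"
  unfolding accessible_def
proof (intro ballI impI)
  fix f assume f: "f \<in> joins \<Theta>" "f \<noteq> Map.empty"
  have "dom f \<subseteq> events \<Theta>"
    using f(1) dom_subset_events_if_covers unfolding joins_def by blast
  then have fin_f: "finite (dom f)"
    using finite_events_if_card_tips[OF fin cc] by (rule finite_subset)
  define P where "P f0 \<longleftrightarrow> f0 \<in> joins \<Theta> \<and> f0 \<subseteq>\<^sub>m f \<and> f0 \<noteq> f" for f0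
  have "P Map.empty"
    using f unfolding P_def by simp
  moreover have "\<forall>f0. P f0 \<longrightarrow> card (dom f0) < Suc (card (dom f))"
  proof (intro allI impI)
    fix f0 assume "P f0"
    then have "dom f0 \<subseteq> dom f"
      unfolding P_def using map_le_implies_dom_le by blast
    then show "card (dom f0) < Suc (card (dom f))"
      using card_mono[OF fin_f] by (simp add: le_imp_less_Suc)
  qed
  ultimately have "\<exists>f0. P f0 \<and> (\<forall>f0'. P f0' \<longrightarrow> card (dom f0') \<le> card (dom f0))"
    by (rule Lattices_Big.ex_has_greatest_nat)
  then obtain f0 where "P f0" and f0_max: "\<forall>f0'. P f0' \<longrightarrow> card (dom f0') \<le> card (dom f0)"
    by blast
  then have f0: "f0 \<in> joins \<Theta>" "f0 \<subseteq>\<^sub>m f" "f0 \<noteq> f"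
    unfolding P_def by auto
  obtain t where t: "t \<in> dom f" "t \<notin> dom f0" and f1: "f |` insert t (dom f0) \<in> joins \<Theta>"
    by (rule joins_augment[OF fin cc f(1) f0])
  have dom_f1: "dom (f |` insert t (dom f0)) = insert t (dom f0)"
    using t(1) map_le_implies_dom_le[OF f0(2)] by auto
  have "f |` insert t (dom f0) = f"
  proof (rule ccontr)
    assume "f |` insert t (dom f0) \<noteq> f"
    then have "P (f |` insert t (dom f0))"
      unfolding P_def using f1 restrict_map_le by blast
    then have "card (dom (f |` insert t (dom f0))) \<le> card (dom f0)"
      using f0_max by blast
    moreover have "finite (dom f0)"
      using fin_f map_le_implies_dom_le[OF f0(2)] by (rule finite_subset[rotated])
    ultimately show False
      using t(2) dom_f1 by simp
  qed
  then have "dom (f(t := None)) \<subseteq> dom f0"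
    using dom_f1 by auto
  moreover have "f0 \<subseteq>\<^sub>m f(t := None)"
    using f0(2) t(2) unfolding map_le_def by auto
  ultimately have "f0 = f(t := None)"
    by (rule map_le_dom_eq[rotated])
  then show "\<exists>x\<in>dom f. f(x := None) \<in> joins \<Theta>"
    using t(1) f0(1) by blast
qed

lemma finite_dom_if_accessible:
  assumes "finite F" "accessible F" "f \<in> F"
  shows "finite (dom f)"
  using assms(3)
proof (induction f rule: measure_induct_rule[of "\<lambda>f. card {g \<in> F. g \<subseteq>\<^sub>m f}"])
  case (less f)
  show ?case
  proof (cases "f = Map.empty")
    case False
    then obtain x where x: "x \<in> dom f" "f(x := None) \<in> F"
      using assms(2) less.prems unfolding accessible_def by blast
    have "{g \<in> F. g \<subseteq>\<^sub>m f(x := None)} \<subseteq> {g \<in> F. g \<subseteq>\<^sub>m f}"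
      by (auto intro: map_le_trans[OF _ upd_None_map_le])
    moreover have "\<not> f \<subseteq>\<^sub>m f(x := None)"
      using x(1) map_le_implies_dom_le by fastforce
    ultimately have "{g \<in> F. g \<subseteq>\<^sub>m f(x := None)} \<subset> {g \<in> F. g \<subseteq>\<^sub>m f}"
      using less.prems by auto
    then have "card {g \<in> F. g \<subseteq>\<^sub>m f(x := None)} < card {g \<in> F. g \<subseteq>\<^sub>m f}"
      using assms(1) by (simp add: psubset_card_mono)
    then have "finite (dom (f(x := None)))"
      using less.IH x(2) by blast
    then show ?thesis
      by simp
  qed simp
qed

lemma accessible_remove_outside:
  assumes "finite F" "accessible F" "f \<in> F" "\<not> dom f \<subseteq> E"
  shows "\<exists>x\<in>dom f - E. \<exists>f'\<in>F. f' \<subseteq>\<^sub>m f \<and> dom f' - E = dom f - E - {x}"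
  using assms(3,4)
proof (induction f rule: measure_induct_rule[of "\<lambda>f. card (dom f)"])
  case (less f)
  have "f \<noteq> Map.empty"
    using less.prems(2) by auto
  then obtain y where y: "y \<in> dom f" "f(y := None) \<in> F"
    using assms(2) less.prems(1) unfolding accessible_def by blast
  show ?case
  proof (cases "y \<in> E")
    case False
    have "dom (f(y := None)) - E = dom f - E - {y}"
      by auto
    moreover have "y \<in> dom f - E"
      using y(1) False by blast
    ultimately show ?thesis
      using y(2) upd_None_map_le by (intro bexI[of _ y] bexI[of _ "f(y := None)"] conjI)
  next
    case True
    have "finite (dom f)"
      using finite_dom_if_accessible[OF assms(1,2) less.prems(1)] .
    then have "card (dom f - {y}) < card (dom f)"
      using y(1) by (rule card_Diff1_less)
    then have "card (dom (f(y := None))) < card (dom f)"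
      by simp
    moreover have "\<not> dom (f(y := None)) \<subseteq> E"
      using less.prems(2) True by auto
    ultimately have "\<exists>x\<in>dom (f(y := None)) - E. \<exists>f'\<in>F. f' \<subseteq>\<^sub>m f(y := None) \<and>
        dom f' - E = dom (f(y := None)) - E - {x}"
      using less.IH y(2) by blast
    moreover have eq: "dom (f(y := None)) - E = dom f - E"
      using True by auto
    ultimately obtain x f' where x: "x \<in> dom f - E" and f': "f' \<in> F" "f' \<subseteq>\<^sub>m f(y := None)"
      "dom f' - E = dom f - E - {x}"
      unfolding eq by blast
    have "f' \<subseteq>\<^sub>m f"
      using f'(2) upd_None_map_le by (rule map_le_trans)
    then show ?thesis
      using x f'(1,3) by blast
  qed
qed

section \<open>Maximal elements and free choice\<close>

definition maximals :: "('e \<rightharpoonup> 'v) set \<Rightarrow> ('e \<rightharpoonup> 'v) set" where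
  "maximals F = {k \<in> F. k \<noteq> Map.empty \<and> (\<forall>k'\<in>F. k \<subseteq>\<^sub>m k' \<longrightarrow> k' = k)}"

definition total_maps :: "'e set \<Rightarrow> ('e \<Rightarrow> 'v set) \<Rightarrow> ('e \<rightharpoonup> 'v) set" where
  "total_maps E I = {f. dom f = E \<and> (\<forall>\<omega>\<in>E. the (f \<omega>) \<in> I \<omega>)}"

definition free_choice_family :: "('e \<rightharpoonup> 'v) set \<Rightarrow> bool" where
  "free_choice_family F \<longleftrightarrow> maximals F = total_maps (events F) (inputs F)"

lemma maximalsD:
  assumes "k \<in> maximals F"
  shows "k \<in> F" "k \<noteq> Map.empty" "k' \<in> F \<Longrightarrow> k \<subseteq>\<^sub>m k' \<Longrightarrow> k' = k"
  using assms unfolding maximals_def by auto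

lemma maximalsI: "k \<in> F \<Longrightarrow> k \<noteq> Map.empty \<Longrightarrow> (\<And>k'. k' \<in> F \<Longrightarrow> k \<subseteq>\<^sub>m k' \<Longrightarrow> k' = k) \<Longrightarrow> k \<in> maximals F"
  unfolding maximals_def by blast

lemma exists_maximal_above:
  assumes "finite F" "f \<in> F" "f \<noteq> Map.empty"
  shows "\<exists>m\<in>maximals F. f \<subseteq>\<^sub>m m"
  using assms(2,3)
proof (induction f rule: measure_induct_rule[of "\<lambda>f. card {g \<in> F. f \<subseteq>\<^sub>m g}"])
  case (less f)
  show ?case
  proof (cases "\<forall>k'\<in>F. f \<subseteq>\<^sub>m k' \<longrightarrow> k' = f")
    case True
    then have "f \<in> maximals F"
      using less.prems by (intro maximalsI) auto
    then show ?thesis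
      using map_le_refl by blast
  next
    case False
    then obtain g where g: "g \<in> F" "f \<subseteq>\<^sub>m g" "g \<noteq> f"
      by blast
    have "{h \<in> F. g \<subseteq>\<^sub>m h} \<subseteq> {h \<in> F. f \<subseteq>\<^sub>m h}"
      using g(2) by (auto intro: map_le_trans)
    moreover have "f \<in> {h \<in> F. f \<subseteq>\<^sub>m h}" "f \<notin> {h \<in> F. g \<subseteq>\<^sub>m h}"
      using less.prems(1) g(2,3) map_le_antisym by auto
    ultimately have "card {h \<in> F. g \<subseteq>\<^sub>m h} < card {h \<in> F. f \<subseteq>\<^sub>m h}"
      using assms(1) by (intro psubset_card_mono) auto
    moreover have "g \<noteq> Map.empty"
      using map_le_implies_dom_le[OF g(2)] less.prems(2) by auto
    ultimately obtain m where "m \<in> maximals F" "g \<subseteq>\<^sub>m m"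
      using less.IH g(1) by blast
    then show ?thesis
      using map_le_trans[OF g(2)] by blast
  qed
qed

lemma total_maps_extend:
  assumes "dom f \<subseteq> E" "\<forall>x\<in>dom f. the (f x) \<in> I x" "\<forall>x\<in>E. I x \<noteq> {}"
  obtains m where "m \<in> total_maps E I" "f \<subseteq>\<^sub>m m"
proof
  define m where "m x = (if x \<in> dom f then f x else if x \<in> E then Some (SOME v. v \<in> I x) else None)" for x
  have "dom m = E"
    using assms(1) unfolding m_def dom_def by (auto split: if_splits)
  moreover have "the (m x) \<in> I x" if "x \<in> E" for x
    using that assms(2,3) unfolding m_def by (auto simp: some_in_eq)
  ultimately show "m \<in> total_maps E I"
    unfolding total_maps_def by blast
  show "f \<subseteq>\<^sub>m m"
    unfolding map_le_def m_def by simp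
qed

lemma total_maps_map_add:
  assumes "E \<inter> E' = {}" "\<And>\<omega>. \<omega> \<notin> E \<Longrightarrow> I \<omega> = {}" "\<And>\<omega>. \<omega> \<notin> E' \<Longrightarrow> I' \<omega> = {}"
  shows "total_maps (E \<union> E') (\<lambda>\<omega>. I \<omega> \<union> I' \<omega>) = {k ++ m | k m. k \<in> total_maps E I \<and> m \<in> total_maps E' I'}"
proof (intro equalityI subsetI)
  fix f assume "f \<in> total_maps (E \<union> E') (\<lambda>\<omega>. I \<omega> \<union> I' \<omega>)"
  then have f: "dom f = E \<union> E'" "\<And>\<omega>. \<omega> \<in> E \<union> E' \<Longrightarrow> the (f \<omega>) \<in> I \<omega> \<union> I' \<omega>"
    unfolding total_maps_def by auto
  have "f |` E \<in> total_maps E I"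
  proof -
    have "the (f \<omega>) \<in> I \<omega>" if "\<omega> \<in> E" for \<omega>
      using f(2)[of \<omega>] assms(3)[of \<omega>] assms(1) that by blast
    then show ?thesis
      using f(1) unfolding total_maps_def by auto
  qed
  moreover have "f |` E' \<in> total_maps E' I'"
  proof -
    have "the (f \<omega>) \<in> I' \<omega>" if "\<omega> \<in> E'" for \<omega>
      using f(2)[of \<omega>] assms(2)[of \<omega>] assms(1) that by blast
    then show ?thesis
      using f(1) unfolding total_maps_def by auto
  qed
  moreover have "f = f |` E ++ f |` E'"
    using f(1) by (auto simp: map_add_def restrict_map_def fun_eq_iff split: option.splits)
  ultimately show "f \<in> {k ++ m | k m. k \<in> total_maps E I \<and> m \<in> total_maps E' I'}"
    by blast
next
  fix f assume "f \<in> {k ++ m | k m. k \<in> total_maps E I \<and> m \<in> total_maps E' I'}"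
  then obtain k m where f: "f = k ++ m" and k: "dom k = E" "\<forall>\<omega>\<in>E. the (k \<omega>) \<in> I \<omega>"
    and m: "dom m = E'" "\<forall>\<omega>\<in>E'. the (m \<omega>) \<in> I' \<omega>"
    unfolding total_maps_def by blast
  have "the (f \<omega>) \<in> I \<omega> \<union> I' \<omega>" if "\<omega> \<in> E \<union> E'" for \<omega>
  proof (cases "\<omega> \<in> E'")
    case True
    then have "f \<omega> = m \<omega>"
      using m(1) f by (auto simp: map_add_def split: option.splits)
    then show ?thesis
      using m(2) True by simp
  next
    case False
    then have "f \<omega> = k \<omega>" "\<omega> \<in> E"
      using that m(1) f by (auto simp: map_add_def split: option.splits)
    then show ?thesis
      using k(2) by simp
  qed
  then show "f \<in> total_maps (E \<union> E') (\<lambda>\<omega>. I \<omega> \<union> I' \<omega>)"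
    unfolding total_maps_def using f k(1) m(1) by auto
qed

lemma inputs_nonempty: "\<omega> \<in> events X \<Longrightarrow> inputs X \<omega> \<noteq> {}"
  unfolding events_def inputs_def by blast

lemma inputs_outside: "\<omega> \<notin> events X \<Longrightarrow> inputs X \<omega> = {}"
  unfolding events_def inputs_def by blast

lemma maxExt_eq_total_maps: "free_choice X \<Longrightarrow> maxExt X = total_maps (events X) (inputs X)"
  unfolding free_choice_def total_maps_def by simp

lemma maxExt_nonempty:
  assumes "free_choice X"
  shows "maxExt X \<noteq> {}"
proof -
  obtain m where "m \<in> total_maps (events X) (inputs X)"
    by (rule total_maps_extend[of Map.empty "events X" "inputs X"]) (auto simp: inputs_nonempty)
  then show ?thesis
    using maxExt_eq_total_maps[OF assms] by blast
qed

lemma maximals_nonempty: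
  assumes "free_choice_family F"
  shows "maximals F \<noteq> {}"
proof -
  obtain m where "m \<in> total_maps (events F) (inputs F)"
    by (rule total_maps_extend[of Map.empty "events F" "inputs F"]) (auto simp: inputs_nonempty)
  then show ?thesis
    using assms unfolding free_choice_family_def by blast
qed

lemma maxExt_subset_joins: "maxExt \<Theta> \<subseteq> joins \<Theta>"
  unfolding maxExt_def joins_eq_insert_Ext by blast

lemma maxExt_eq_maximals_joins:
  assumes "Map.empty \<notin> \<Theta>"
  shows "maxExt \<Theta> = maximals (joins \<Theta>)"
  unfolding maxExt_def maximals_def Ext_eq_joins[OF assms] using map_le_empty_iff by auto

lemma free_choice_iff_joins: "Map.empty \<notin> \<Theta> \<Longrightarrow> free_choice \<Theta> \<longleftrightarrow> free_choice_family (joins \<Theta>)"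
  unfolding free_choice_def free_choice_family_def total_maps_def events_joins inputs_joins
  by (simp add: maxExt_eq_maximals_joins)

lemma space_le_iff_joins:
  assumes "Map.empty \<notin> A" "Map.empty \<notin> B"
  shows "space_le A B \<longleftrightarrow> joins B \<subseteq> joins A"
proof -
  have "space_le A B \<longleftrightarrow> joins B - {Map.empty} \<subseteq> joins A - {Map.empty}"
    unfolding space_le_def by (simp add: Ext_eq_joins assms)
  also have "\<dots> \<longleftrightarrow> joins B \<subseteq> joins A"
    using empty_in_joins by blast
  finally show ?thesis .
qed

lemma causally_complete_iff_joins:
  assumes "space \<Theta>"
  shows "causally_complete \<Theta> \<longleftrightarrow> free_choice_family (joins \<Theta>) \<and> accessible (joins \<Theta>)"
proof -
  have "finite \<Theta>" "vee_prime \<Theta>"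
    using assms unfolding space_def by auto
  then have "(\<forall>h\<in>\<Theta>. card (tips \<Theta> h) = 1) \<longleftrightarrow> accessible (joins \<Theta>)"
    using accessible_joins card_tips_if_accessible by blast
  then show ?thesis
    unfolding causally_complete_def free_choice_iff_joins[OF empty_notin_if_space[OF assms]]
    by simp
qed

section \<open>Causally complete refinements as families of maps\<close>

definition cc_family :: "('e \<rightharpoonup> 'v) set \<Rightarrow> ('e \<rightharpoonup> 'v) set \<Rightarrow> bool" where
  "cc_family X F \<longleftrightarrow>
     finite F \<and> join_closed F \<and> accessible F \<and> free_choice_family F \<and> joins X \<subseteq> F"

definition minimal_cc_family :: "('e \<rightharpoonup> 'v) set \<Rightarrow> ('e \<rightharpoonup> 'v) set \<Rightarrow> bool" where
  "minimal_cc_family X F \<longleftrightarrow> cc_family X F \<and> (\<forall>F'. cc_family X F' \<longrightarrow> F' \<subseteq> F \<longrightarrow> F' = F)"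

lemma cc_familyD:
  assumes "cc_family X F"
  shows "finite F" "join_closed F" "accessible F" "free_choice_family F" "joins X \<subseteq> F"
  using assms unfolding cc_family_def by auto

lemma minimal_cc_familyD:
  assumes "minimal_cc_family X F"
  shows "cc_family X F" "cc_family X F' \<Longrightarrow> F' \<subseteq> F \<Longrightarrow> F' = F"
  using assms unfolding minimal_cc_family_def by auto

lemma cc_family_joins_iff:
  assumes "space \<Theta>1" "Map.empty \<notin> X"
  shows "cc_family X (joins \<Theta>1) \<longleftrightarrow> space_le \<Theta>1 X \<and> causally_complete \<Theta>1"
  using assms finite_joins join_closed_joins
    causally_complete_iff_joins[OF assms(1)] space_le_iff_joins[OF empty_notin_if_space[OF assms(1)] assms(2)]
  unfolding cc_family_def space_def by blast

lemma CC_eq_minimal_cc_families: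
  assumes "Map.empty \<notin> X"
  shows "CC X = {\<Theta>1. space \<Theta>1 \<and> minimal_cc_family X (joins \<Theta>1)}"
proof -
  define S where "S = {\<Theta>1. space \<Theta>1 \<and> cc_family X (joins \<Theta>1)}"
  have S_eq: "{\<Theta>1. space \<Theta>1 \<and> space_le \<Theta>1 X \<and> causally_complete \<Theta>1} = S"
    unfolding S_def using cc_family_joins_iff[OF _ assms] by blast
  have le: "space_le A B \<longleftrightarrow> joins B \<subseteq> joins A" if "A \<in> S" "B \<in> S" for A B
    using space_le_iff_joins empty_notin_if_space that unfolding S_def by blast
  have irr: "join_irreducibles F \<in> S \<and> joins (join_irreducibles F) = F" if "cc_family X F" for F
    using that space_join_irreducibles joins_join_irreducibles unfolding S_def cc_family_def by auto
  have "\<Theta>1 \<in> CC X \<longleftrightarrow> space \<Theta>1 \<and> minimal_cc_family X (joins \<Theta>1)" for \<Theta>1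
  proof
    assume "\<Theta>1 \<in> CC X"
    then have \<Theta>1: "\<Theta>1 \<in> S" and min0: "\<forall>\<Theta>2\<in>S. space_le \<Theta>1 \<Theta>2 \<longrightarrow> space_le \<Theta>2 \<Theta>1"
      unfolding CC_def Let_def S_eq by auto
    have min: "joins \<Theta>1 \<subseteq> joins \<Theta>2" if "\<Theta>2 \<in> S" "joins \<Theta>2 \<subseteq> joins \<Theta>1" for \<Theta>2
      using min0 that \<Theta>1 by (auto simp: le)
    have "F' = joins \<Theta>1" if "cc_family X F'" "F' \<subseteq> joins \<Theta>1" for F'
      using min[of "join_irreducibles F'"] irr[OF that(1)] that(2) by auto
    then show "space \<Theta>1 \<and> minimal_cc_family X (joins \<Theta>1)"
      using \<Theta>1 unfolding S_def minimal_cc_family_def by blast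
  next
    assume "space \<Theta>1 \<and> minimal_cc_family X (joins \<Theta>1)"
    then have \<Theta>1: "\<Theta>1 \<in> S" and min: "\<And>F'. cc_family X F' \<Longrightarrow> F' \<subseteq> joins \<Theta>1 \<Longrightarrow> F' = joins \<Theta>1"
      unfolding S_def minimal_cc_family_def by auto
    have "space_le \<Theta>2 \<Theta>1" if "\<Theta>2 \<in> S" "space_le \<Theta>1 \<Theta>2" for \<Theta>2
    proof -
      have "joins \<Theta>2 \<subseteq> joins \<Theta>1"
        using that(2) le[OF \<Theta>1 that(1)] by simp
      moreover have "cc_family X (joins \<Theta>2)"
        using that(1) unfolding S_def by simp
      ultimately have "joins \<Theta>2 = joins \<Theta>1"
        using min by blast
      then show ?thesis
        using le[OF that(1) \<Theta>1] by simp
    qed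
    then show "\<Theta>1 \<in> CC X"
      unfolding CC_def Let_def S_eq using \<Theta>1 by blast
  qed
  then show ?thesis
    by blast
qed

definition below_maxExt :: "('e \<rightharpoonup> 'v) set \<Rightarrow> ('e \<rightharpoonup> 'v) set \<Rightarrow> bool" where
  "below_maxExt X F \<longleftrightarrow> (\<forall>f\<in>F. \<exists>m\<in>maxExt X. f \<subseteq>\<^sub>m m)"

lemma below_maxExt_subset: "below_maxExt X F \<Longrightarrow> F' \<subseteq> F \<Longrightarrow> below_maxExt X F'"
  unfolding below_maxExt_def by blast

context
  fixes X F :: "('e \<rightharpoonup> 'v) set"
  assumes joins_subset: "joins X \<subseteq> F" and below: "below_maxExt X F" and space: "space X"
begin

lemma maxExt_subset_if_below: "maxExt X \<subseteq> F"
  using joins_subset maxExt_subset_joins by blast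

lemma maximals_eq_maxExt: "maximals F = maxExt X"
proof (intro equalityI subsetI)
  fix k assume k: "k \<in> maximals F"
  then obtain m where m: "m \<in> maxExt X" "k \<subseteq>\<^sub>m m"
    using below maximalsD(1) unfolding below_maxExt_def by blast
  then have "m = k"
    using maximalsD(3)[OF k] maxExt_subset_if_below by blast
  then show "k \<in> maxExt X"
    using m(1) by simp
next
  fix m assume m: "m \<in> maxExt X"
  then have m_max: "m \<in> maximals (joins X)"
    using maxExt_eq_maximals_joins empty_notin_if_space[OF space] by blast
  show "m \<in> maximals F"
  proof (rule maximalsI)
    show "m \<in> F" "m \<noteq> Map.empty"
      using m maxExt_subset_if_below maximalsD(2)[OF m_max] by auto
    fix f assume f: "f \<in> F" "m \<subseteq>\<^sub>m f"
    obtain m' where m': "m' \<in> maxExt X" "f \<subseteq>\<^sub>m m'"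
      using below f(1) unfolding below_maxExt_def by blast
    have "m' = m"
      using maximalsD(3)[OF m_max] m'(1) maxExt_subset_joins map_le_trans[OF f(2) m'(2)] by blast
    then show "f = m"
      using f(2) m'(2) map_le_antisym by blast
  qed
qed

lemma events_eq_if_below: "events F = events X"
proof
  have "events (joins X) \<subseteq> events F"
    using joins_subset unfolding events_def by blast
  then show "events X \<subseteq> events F"
    by (simp add: events_joins)
  show "events F \<subseteq> events X"
  proof
    fix x assume "x \<in> events F"
    then obtain f where f: "f \<in> F" "x \<in> dom f"
      unfolding events_def by blast
    then obtain m where "m \<in> maxExt X" "f \<subseteq>\<^sub>m m"
      using below unfolding below_maxExt_def by blast
    then have "x \<in> dom m" "covers X m"
      using f(2) map_le_implies_dom_le maxExt_subset_joins unfolding joins_def by blast+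
    then show "x \<in> events X"
      using dom_subset_events_if_covers by blast
  qed
qed

lemma inputs_eq_if_below: "inputs F = inputs X"
proof (intro ext equalityI subsetI)
  fix \<omega> v assume "v \<in> inputs F \<omega>"
  then obtain f where f: "f \<in> F" "f \<omega> = Some v"
    unfolding inputs_def by blast
  then obtain m where m: "m \<in> maxExt X" "f \<subseteq>\<^sub>m m"
    using below unfolding below_maxExt_def by blast
  then have "m \<omega> = Some v"
    using f(2) unfolding map_le_def by (metis domI)
  then have "v \<in> inputs (joins X) \<omega>"
    using m(1) maxExt_subset_joins unfolding inputs_def by blast
  then show "v \<in> inputs X \<omega>"
    by (simp add: inputs_joins)
next
  fix \<omega> v assume "v \<in> inputs X \<omega>"
  then show "v \<in> inputs F \<omega>"
    using joins_subset subset_joins unfolding inputs_def by blast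
qed

lemma free_choice_family_if_below: "free_choice X \<Longrightarrow> free_choice_family F"
  unfolding free_choice_family_def maximals_eq_maxExt events_eq_if_below inputs_eq_if_below
  by (rule maxExt_eq_total_maps)

end

lemma below_maxExt_if_covers:
  assumes "free_choice X" "covers {g. \<exists>m\<in>maxExt X. g \<subseteq>\<^sub>m m} f"
  shows "\<exists>m\<in>maxExt X. f \<subseteq>\<^sub>m m"
proof -
  have "x \<in> events X \<and> the (f x) \<in> inputs X x" if x: "x \<in> dom f" for x
  proof -
    obtain g where g: "g \<in> {g. \<exists>m\<in>maxExt X. g \<subseteq>\<^sub>m m}" "g \<subseteq>\<^sub>m f" "x \<in> dom g"
      using assms(2) x by (rule coversE)
    then obtain m where m: "m \<in> maxExt X" "g \<subseteq>\<^sub>m m"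
      by blast
    have "g x = f x" "g x = m x"
      using g(2,3) m(2) unfolding map_le_def by blast+
    then have "f x = m x" "x \<in> dom m"
      using g(3) by (auto simp: domIff)
    moreover have "m \<in> total_maps (events X) (inputs X)"
      using m(1) maxExt_eq_total_maps[OF assms(1)] by simp
    ultimately show ?thesis
      unfolding total_maps_def by auto
  qed
  then have "dom f \<subseteq> events X" "\<forall>x\<in>dom f. the (f x) \<in> inputs X x"
    by auto
  moreover have "\<forall>x\<in>events X. inputs X x \<noteq> {}"
    by (simp add: inputs_nonempty)
  ultimately obtain m where "m \<in> total_maps (events X) (inputs X)" "f \<subseteq>\<^sub>m m"
    by (rule total_maps_extend)
  then show ?thesis
    using maxExt_eq_total_maps[OF assms(1)] by blast
qed

lemma below_maxExt_joins:
  assumes "space X" "free_choice X"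
  shows "below_maxExt X (joins X)"
  unfolding below_maxExt_def
proof
  fix f assume f: "f \<in> joins X"
  show "\<exists>m\<in>maxExt X. f \<subseteq>\<^sub>m m"
  proof (cases "f = Map.empty")
    case True
    then show ?thesis
      using maxExt_nonempty[OF assms(2)] by auto
  next
    case False
    have "finite (joins X)"
      using assms(1) finite_joins unfolding space_def by blast
    then obtain m where "m \<in> maximals (joins X)" "f \<subseteq>\<^sub>m m"
      using exists_maximal_above f False by blast
    then show ?thesis
      using maxExt_eq_maximals_joins[OF empty_notin_if_space[OF assms(1)]] by auto
  qed
qed

lemma accessible_below_part:
  assumes "accessible F"
  shows "accessible {f \<in> F. \<exists>m\<in>S. f \<subseteq>\<^sub>m m}"
  unfolding accessible_def
proof (intro ballI impI)
  fix f assume f: "f \<in> {f \<in> F. \<exists>m\<in>S. f \<subseteq>\<^sub>m m}" "f \<noteq> Map.empty"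
  then obtain x where x: "x \<in> dom f" "f(x := None) \<in> F"
    using assms unfolding accessible_def by blast
  obtain m where m: "m \<in> S" "f \<subseteq>\<^sub>m m"
    using f(1) by blast
  have "f(x := None) \<subseteq>\<^sub>m m"
    using upd_None_map_le m(2) by (rule map_le_trans)
  then show "\<exists>x\<in>dom f. f(x := None) \<in> {f \<in> F. \<exists>m\<in>S. f \<subseteq>\<^sub>m m}"
    using x m(1) by blast
qed

lemma cc_family_below_maxExt_part:
  assumes F: "cc_family X F" and X: "space X" "free_choice X"
  shows "cc_family X {f \<in> F. \<exists>m\<in>maxExt X. f \<subseteq>\<^sub>m m}" (is "cc_family X ?F")
proof -
  have sub: "?F \<subseteq> F"
    by blast
  have "join_closed ?F"
  proof (rule join_closedI)
    fix f assume c: "covers ?F f"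
    have "f \<in> F"
      using join_closedD[OF cc_familyD(2)[OF F] covers_mono[OF c sub]] .
    moreover have "covers {g. \<exists>m\<in>maxExt X. g \<subseteq>\<^sub>m m} f"
      using c by (rule covers_mono) blast
    then have "\<exists>m\<in>maxExt X. f \<subseteq>\<^sub>m m"
      by (rule below_maxExt_if_covers[OF X(2)])
    ultimately show "f \<in> ?F"
      by blast
  qed
  moreover have "joins X \<subseteq> ?F"
    using below_maxExt_joins[OF X] cc_familyD(5)[OF F] unfolding below_maxExt_def by blast
  moreover have "below_maxExt X ?F"
    unfolding below_maxExt_def by blast
  ultimately have "free_choice_family ?F"
    using free_choice_family_if_below X by blast
  moreover have "finite ?F"
    using sub cc_familyD(1)[OF F] by (rule finite_subset)
  ultimately show ?thesis
    unfolding cc_family_def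
    using \<open>join_closed ?F\<close> \<open>joins X \<subseteq> ?F\<close> accessible_below_part[OF cc_familyD(3)[OF F]] by blast
qed

lemma below_maxExt_if_minimal:
  assumes "minimal_cc_family X F" "space X" "free_choice X"
  shows "below_maxExt X F"
proof -
  have "cc_family X {f \<in> F. \<exists>m\<in>maxExt X. f \<subseteq>\<^sub>m m}"
    using cc_family_below_maxExt_part[OF minimal_cc_familyD(1)[OF assms(1)] assms(2,3)] .
  then have "{f \<in> F. \<exists>m\<in>maxExt X. f \<subseteq>\<^sub>m m} = F"
    using minimal_cc_familyD(2)[OF assms(1)] by blast
  then show ?thesis
    unfolding below_maxExt_def by blast
qed

section \<open>Grafting families onto maximal elements\<close>

definition graft ::
  "('e \<rightharpoonup> 'v) set \<Rightarrow> ('e \<rightharpoonup> 'v) set \<Rightarrow> (('e \<rightharpoonup> 'v) \<Rightarrow> ('e \<rightharpoonup> 'v) set) \<Rightarrow> ('e \<rightharpoonup> 'v) set" where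
  "graft F0 K G = F0 \<union> {k ++ g | k g. k \<in> K \<and> g \<in> G k}"

lemma graft_base: "f \<in> F0 \<Longrightarrow> f \<in> graft F0 K G"
  unfolding graft_def by blast

lemma graft_branch: "k \<in> K \<Longrightarrow> g \<in> G k \<Longrightarrow> k ++ g \<in> graft F0 K G"
  unfolding graft_def by blast

lemma graftE:
  assumes "f \<in> graft F0 K G"
  obtains "f \<in> F0" | k g where "k \<in> K" "g \<in> G k" "f = k ++ g"
  using assms unfolding graft_def by blast

lemma graft_mono: "F0 \<subseteq> F0' \<Longrightarrow> (\<And>k. k \<in> K \<Longrightarrow> G k \<subseteq> G' k) \<Longrightarrow> graft F0 K G \<subseteq> graft F0' K G'"
  unfolding graft_def by blast

lemma graft_cong: "(\<And>k. k \<in> K \<Longrightarrow> G k = G' k) \<Longrightarrow> graft F0 K G = graft F0 K G'"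
  unfolding graft_def by force

lemma finite_graft:
  assumes "finite F0" "finite K" "\<And>k. k \<in> K \<Longrightarrow> finite (G k)"
  shows "finite (graft F0 K G)"
proof -
  have "{k ++ g | k g. k \<in> K \<and> g \<in> G k} = (\<lambda>(k, g). k ++ g) ` (SIGMA k:K. G k)"
    by auto
  then show ?thesis
    unfolding graft_def using assms by auto
qed

text \<open>These domain conditions make a grafted map \<open>k ++ g\<close> determine both \<open>k\<close> and \<open>g\<close>.\<close>

locale graft_domains =
  fixes E :: "'e set" and F0 K :: "('e \<rightharpoonup> 'v) set" and G :: "('e \<rightharpoonup> 'v) \<Rightarrow> ('e \<rightharpoonup> 'v) set"
  assumes dom_base: "a \<in> F0 \<Longrightarrow> dom a \<subseteq> E"
    and dom_root: "k \<in> K \<Longrightarrow> dom k = E"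
    and dom_branch: "k \<in> K \<Longrightarrow> g \<in> G k \<Longrightarrow> dom g \<inter> E = {}"
begin

lemma graft_domains_mono:
  assumes "F0' \<subseteq> F0" "\<And>k. k \<in> K \<Longrightarrow> G' k \<subseteq> G k"
  shows "graft_domains E F0' K G'"
  using assms dom_base dom_root dom_branch by unfold_locales blast+

lemma branch_mem_graft: "k \<in> K \<Longrightarrow> g \<in> G k \<Longrightarrow> k ++ g \<in> graft F0 K G"
  by (rule graft_branch)

lemma root_branch_disjoint:
  assumes "k \<in> K" "g \<in> G k"
  shows "dom k \<inter> dom g = {}"
  using dom_branch[OF assms] unfolding dom_root[OF assms(1)] by blast

lemma root_le_graft: "k \<in> K \<Longrightarrow> g \<in> G k \<Longrightarrow> k \<subseteq>\<^sub>m k ++ g"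
  by (rule map_le_map_add_left[OF root_branch_disjoint])

lemma root_unique:
  assumes "k \<in> K" "k' \<in> K" "k \<subseteq>\<^sub>m f" "k' \<subseteq>\<^sub>m f"
  shows "k = k'"
  using assms(3,4) by (rule map_le_same_dom) (simp add: dom_root assms(1,2))

lemma graft_le_graft_iff:
  assumes "k \<in> K" "g \<in> G k" "k' \<in> K" "g' \<in> G k'"
  shows "k ++ g \<subseteq>\<^sub>m k' ++ g' \<longleftrightarrow> k = k' \<and> g \<subseteq>\<^sub>m g'"
proof
  assume le: "k ++ g \<subseteq>\<^sub>m k' ++ g'"
  have "k = k'"
    using root_unique[OF assms(1,3)] map_le_trans[OF root_le_graft[OF assms(1,2)] le]
      root_le_graft[OF assms(3,4)] by blast
  moreover have "g \<subseteq>\<^sub>m k' ++ g'"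
    using map_le_map_add le by (rule map_le_trans)
  ultimately show "k = k' \<and> g \<subseteq>\<^sub>m g'"
    using map_le_of_map_add_right root_branch_disjoint[OF assms(1,2)] by blast
next
  assume "k = k' \<and> g \<subseteq>\<^sub>m g'"
  then show "k ++ g \<subseteq>\<^sub>m k' ++ g'"
    using map_add_mono_right root_branch_disjoint[OF assms(3,4)] by blast
qed

lemma branch_empty_if_graft_le:
  assumes "k \<in> K" "g \<in> G k" "k ++ g \<subseteq>\<^sub>m f" "dom f \<subseteq> E"
  shows "g = Map.empty"
proof (rule empty_if_dom_disjoint_subset)
  show "dom g \<subseteq> E"
    using map_le_implies_dom_le[OF map_le_trans[OF map_le_map_add assms(3)]] assms(4) by blast
  show "dom g \<inter> E = {}"
    using dom_branch[OF assms(1,2)] .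
qed

lemma covers_restrict_compl:
  assumes cov: "covers (graft F0 K G) f" and k: "k \<in> K" "k \<subseteq>\<^sub>m f"
  shows "covers (G k) (f |` (- E))"
proof (rule coversI)
  fix y assume "y \<in> dom (f |` (- E))"
  then have y: "y \<in> dom f" "y \<notin> E"
    by auto
  obtain c where c: "c \<in> graft F0 K G" "c \<subseteq>\<^sub>m f" "y \<in> dom c"
    using cov y(1) by (rule coversE)
  from c(1) show "\<exists>h\<in>G k. h \<subseteq>\<^sub>m f |` (- E) \<and> y \<in> dom h"
  proof (cases rule: graftE)
    case 1
    then show ?thesis
      using dom_base c(3) y(2) by blast
  next
    case (2 k' g')
    have "k' \<subseteq>\<^sub>m f"
      using root_le_graft[OF 2(1,2)] c(2) unfolding 2(3) by (rule map_le_trans)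
    then have "k' = k"
      using root_unique[OF 2(1) k(1)] k(2) by blast
    moreover have "g' \<subseteq>\<^sub>m f |` (- E)"
      using map_le_trans[OF map_le_map_add c(2)[unfolded 2(3)]] dom_branch[OF 2(1,2)]
      by (intro map_le_restrict_map) auto
    moreover have "y \<in> dom g'"
      using c(3) y(2) dom_root[OF 2(1)] unfolding 2(3) by auto
    ultimately show ?thesis
      using 2(2) by blast
  qed
qed

lemma covers_graftE:
  assumes "covers (graft F0 K G) f"
  obtains "covers F0 f"
    | k where "k \<in> K" "f = k ++ f |` (- E)" "covers (G k) (f |` (- E))"
proof (cases "\<exists>k\<in>K. \<exists>g\<in>G k. k ++ g \<subseteq>\<^sub>m f")
  case True
  then obtain k g where kg: "k \<in> K" "g \<in> G k" "k ++ g \<subseteq>\<^sub>m f"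
    by blast
  have kf: "k \<subseteq>\<^sub>m f"
    using root_le_graft[OF kg(1,2)] kg(3) by (rule map_le_trans)
  then show ?thesis
    using that(2) kg(1) map_add_restrict_compl[OF kf dom_root[OF kg(1)]]
      covers_restrict_compl[OF assms kg(1) kf] by simp
next
  case False
  have "covers F0 f"
  proof (rule coversI)
    fix y assume "y \<in> dom f"
    with assms obtain c where c: "c \<in> graft F0 K G" "c \<subseteq>\<^sub>m f" "y \<in> dom c"
      by (rule coversE)
    from c(1) show "\<exists>h\<in>F0. h \<subseteq>\<^sub>m f \<and> y \<in> dom h"
    proof (cases rule: graftE)
      case 1
      then show ?thesis
        using c(2,3) by blast
    next
      case (2 k g)
      then show ?thesis
        using False c(2) by blast
    qed
  qed
  then show ?thesis
    by (rule that(1))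
qed

lemma join_closed_graft:
  assumes "join_closed F0" "\<And>k. k \<in> K \<Longrightarrow> join_closed (G k)"
  shows "join_closed (graft F0 K G)"
proof (rule join_closedI)
  fix f assume "covers (graft F0 K G) f"
  then show "f \<in> graft F0 K G"
  proof (cases rule: covers_graftE)
    case 1
    then show ?thesis
      using join_closedD[OF assms(1)] graft_base by blast
  next
    case (2 k)
    then have "f |` (- E) \<in> G k"
      using join_closedD[OF assms(2)] by blast
    then show ?thesis
      using branch_mem_graft[OF 2(1)] 2(2) by metis
  qed
qed

lemma accessible_graft:
  assumes "accessible F0" "K \<subseteq> F0" "\<And>k. k \<in> K \<Longrightarrow> accessible (G k)"
  shows "accessible (graft F0 K G)"
  unfolding accessible_def
proof (intro ballI impI)
  fix f assume f: "f \<in> graft F0 K G" "f \<noteq> Map.empty"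
  have base_case: "\<exists>x\<in>dom f. f(x := None) \<in> graft F0 K G" if "f \<in> F0"
    using assms(1) that f(2) graft_base unfolding accessible_def by blast
  from f(1) show "\<exists>x\<in>dom f. f(x := None) \<in> graft F0 K G"
  proof (cases rule: graftE)
    case 1
    then show ?thesis
      by (rule base_case)
  next
    case (2 k g)
    show ?thesis
    proof (cases "g = Map.empty")
      case True
      then show ?thesis
        using base_case 2(1,3) assms(2) by auto
    next
      case False
      then obtain x where x: "x \<in> dom g" "g(x := None) \<in> G k"
        using assms(3)[OF 2(1)] 2(2) unfolding accessible_def by blast
      have "x \<notin> dom k"
        using x(1) root_branch_disjoint[OF 2(1,2)] by blast
      then have "f(x := None) = k ++ g(x := None)"
        unfolding 2(3) by (rule map_add_upd_None)
      then have "f(x := None) \<in> graft F0 K G"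
        using branch_mem_graft[OF 2(1) x(2)] by simp
      moreover have "x \<in> dom f"
        using x(1) unfolding 2(3) by simp
      ultimately show ?thesis
        by blast
    qed
  qed
qed

lemma covers_graft_branch:
  assumes "k \<in> K" "covers F0 k" "covers (G k) g"
  shows "covers (graft F0 K G) (k ++ g)"
proof (rule coversI)
  have "dom g \<inter> E = {}"
    using assms(3) dom_branch[OF assms(1)] by (rule covers_disjoint)
  then have disj: "dom g \<inter> dom k = {}"
    using dom_root[OF assms(1)] by blast
  fix y assume y: "y \<in> dom (k ++ g)"
  show "\<exists>h\<in>graft F0 K G. h \<subseteq>\<^sub>m k ++ g \<and> y \<in> dom h"
  proof (cases "y \<in> dom g")
    case True
    then obtain b where b: "b \<in> G k" "b \<subseteq>\<^sub>m g" "y \<in> dom b"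
      using assms(3) coversE by metis
    have "k ++ b \<subseteq>\<^sub>m k ++ g"
      using b(2) disj by (rule map_add_mono_right)
    moreover have "y \<in> dom (k ++ b)"
      using b(3) by simp
    ultimately show ?thesis
      using branch_mem_graft[OF assms(1) b(1)] by (intro bexI[of _ "k ++ b"] conjI)
  next
    case False
    then have "y \<in> dom k"
      using y by simp
    then obtain a where a: "a \<in> F0" "a \<subseteq>\<^sub>m k" "y \<in> dom a"
      using assms(2) coversE by metis
    have "k \<subseteq>\<^sub>m k ++ g"
      using disj by (intro map_le_map_add_left) blast
    then have "a \<subseteq>\<^sub>m k ++ g"
      using a(2) by (rule map_le_trans[rotated])
    then show ?thesis
      using graft_base[OF a(1)] a(3) by (intro bexI[of _ a] conjI)
  qed
qed

lemma joins_graft: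
  assumes "K \<subseteq> joins F0"
  shows "joins (graft F0 K G) = graft (joins F0) K (\<lambda>k. joins (G k))"
proof (intro equalityI subsetI)
  fix f assume "f \<in> joins (graft F0 K G)"
  then have "covers (graft F0 K G) f"
    unfolding joins_def by simp
  then show "f \<in> graft (joins F0) K (\<lambda>k. joins (G k))"
  proof (cases rule: covers_graftE)
    case 1
    then show ?thesis
      unfolding joins_def by (intro graft_base) simp
  next
    case (2 k)
    have "f |` (- E) \<in> joins (G k)"
      using 2(3) unfolding joins_def by simp
    then have "k ++ f |` (- E) \<in> graft (joins F0) K (\<lambda>k. joins (G k))"
      by (rule graft_branch[where G = "\<lambda>k. joins (G k)", OF 2(1)])
    then show ?thesis
      using 2(2) by simp
  qed
next
  fix f assume "f \<in> graft (joins F0) K (\<lambda>k. joins (G k))"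
  then show "f \<in> joins (graft F0 K G)"
  proof (cases rule: graftE)
    case 1
    moreover have "F0 \<subseteq> graft F0 K G"
      unfolding graft_def by blast
    ultimately show ?thesis
      using joins_mono by blast
  next
    case (2 k g)
    then show ?thesis
      using covers_graft_branch[of k g] assms unfolding joins_def by blast
  qed
qed

lemma graft_domains_joins: "graft_domains E (joins F0) K (\<lambda>k. joins (G k))"
proof
  show "dom a \<subseteq> E" if "a \<in> joins F0" for a
  proof (rule dom_subset_if_covers)
    show "covers F0 a"
      using that unfolding joins_def by simp
  qed (rule dom_base)
  show "dom k = E" if "k \<in> K" for k
    using that by (rule dom_root)
  show "dom g \<inter> E = {}" if "k \<in> K" "g \<in> joins (G k)" for k g
  proof (rule covers_disjoint)
    show "covers (G k) g"
      using that(2) unfolding joins_def by simp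
  qed (rule dom_branch[OF that(1)])
qed

lemma strictly_below_graft_base:
  assumes "\<And>k. k \<in> K \<Longrightarrow> Map.empty \<notin> G k" "h \<in> F0"
  shows "strictly_below (graft F0 K G) h \<subseteq> strictly_below F0 h"
proof
  fix c assume c: "c \<in> strictly_below (graft F0 K G) h"
  then have "c \<in> graft F0 K G" and c_le: "c \<subseteq>\<^sub>m h"
    unfolding strictly_below_def by auto
  then have "c \<in> F0"
  proof (cases rule: graftE)
    case (2 k g)
    then have "g = Map.empty"
      using c_le dom_base[OF assms(2)] by (intro branch_empty_if_graft_le[of k g h]) simp_all
    then show ?thesis
      using 2(1,2) assms(1) by blast
  qed
  then show "c \<in> strictly_below F0 h"
    using c unfolding strictly_below_def by blast
qed

lemma covers_strictly_below_branch:
  assumes "k \<in> K" "b \<in> G k" and cov: "covers (strictly_below (graft F0 K G) (k ++ b)) (k ++ b)"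
  shows "covers (strictly_below (G k) b) b"
proof (rule coversI)
  fix y assume y: "y \<in> dom b"
  then have "y \<notin> E" "y \<in> dom (k ++ b)"
    using dom_branch[OF assms(1,2)] by auto
  then obtain c where c: "c \<in> strictly_below (graft F0 K G) (k ++ b)" "y \<in> dom c"
    using cov coversE by metis
  then have c': "c \<in> graft F0 K G" "c \<subseteq>\<^sub>m k ++ b" "c \<noteq> k ++ b"
    unfolding strictly_below_def by auto
  from c'(1) show "\<exists>g\<in>strictly_below (G k) b. g \<subseteq>\<^sub>m b \<and> y \<in> dom g"
  proof (cases rule: graftE)
    case 1
    then show ?thesis
      using dom_base c(2) \<open>y \<notin> E\<close> by blast
  next
    case (2 k' b')
    then have "k' = k" "b' \<subseteq>\<^sub>m b"
      using graft_le_graft_iff[OF 2(1,2) assms(1,2)] c'(2) by auto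
    moreover have "b' \<noteq> b"
      using c'(3) 2(3) \<open>k' = k\<close> by auto
    moreover have "y \<in> dom b'"
      using c(2) 2(3) dom_root[OF 2(1)] \<open>y \<notin> E\<close> by auto
    ultimately show ?thesis
      using 2(2) unfolding strictly_below_def by blast
  qed
qed

lemma vee_prime_graft:
  assumes "vee_prime F0" "\<And>k. k \<in> K \<Longrightarrow> vee_prime (G k)"
  shows "vee_prime (graft F0 K G)"
proof (rule vee_primeI)
  fix h assume "h \<in> graft F0 K G"
  then show "\<not> covers (strictly_below (graft F0 K G) h) h"
  proof (cases rule: graftE)
    case 1
    then show ?thesis
      using not_covers_strictly_below[OF assms(1) 1] covers_mono
        strictly_below_graft_base[OF empty_notin_if_vee_prime[OF assms(2)] 1] by blast
  next
    case (2 k b)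
    then show ?thesis
      using covers_strictly_below_branch[OF 2(1,2)] not_covers_strictly_below[OF assms(2)[OF 2(1)] 2(2)]
      by blast
  qed
qed

lemma maximal_graft_not_base:
  assumes fin: "finite F0" and K: "K = maximals F0"
    and nonempty: "\<And>k. k \<in> K \<Longrightarrow> \<exists>g\<in>G k. g \<noteq> Map.empty"
    and f: "f \<in> maximals (graft F0 K G)"
  shows "f \<notin> F0"
proof
  assume f0: "f \<in> F0"
  obtain k where k: "k \<in> K" "f \<subseteq>\<^sub>m k"
    using exists_maximal_above[OF fin f0 maximalsD(2)[OF f]] K by blast
  obtain g where g: "g \<in> G k" "g \<noteq> Map.empty"
    using nonempty[OF k(1)] by blast
  have "f \<subseteq>\<^sub>m k ++ g"
    using k(2) root_le_graft[OF k(1) g(1)] by (rule map_le_trans)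
  then have "k ++ g = f"
    using maximalsD(3)[OF f] branch_mem_graft[OF k(1) g(1)] by blast
  then have "g = Map.empty"
    using dom_base[OF f0] by (intro branch_empty_if_graft_le[OF k(1) g(1)]) simp_all
  then show False
    using g(2) by contradiction
qed

lemma graft_maximal_mem_maximals:
  assumes "k \<in> K" "m \<in> maximals (G k)"
  shows "k ++ m \<in> maximals (graft F0 K G)"
proof (rule maximalsI)
  note m = maximalsD[OF assms(2)]
  show "k ++ m \<in> graft F0 K G"
    using assms(1) m(1) by (rule branch_mem_graft)
  show "k ++ m \<noteq> Map.empty"
    using m(2) by auto
  fix f' assume f': "f' \<in> graft F0 K G" "k ++ m \<subseteq>\<^sub>m f'"
  from f'(1) show "f' = k ++ m"
  proof (cases rule: graftE)
    case 1
    then have "m = Map.empty"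
      using f'(2) by (intro branch_empty_if_graft_le[OF assms(1) m(1) _ dom_base])
    then show ?thesis
      using m(2) by contradiction
  next
    case (2 k' g')
    then have "k = k'" "m \<subseteq>\<^sub>m g'"
      using graft_le_graft_iff[OF assms(1) m(1) 2(1,2)] f'(2) by auto
    then show ?thesis
      using m(3) 2 by auto
  qed
qed

lemma maximals_graft:
  assumes fin: "finite F0" and K: "K = maximals F0"
    and nonempty: "\<And>k. k \<in> K \<Longrightarrow> \<exists>g\<in>G k. g \<noteq> Map.empty"
    and fin_G: "\<And>k. k \<in> K \<Longrightarrow> finite (G k)"
  shows "maximals (graft F0 K G) = {k ++ m | k m. k \<in> K \<and> m \<in> maximals (G k)}"
proof (intro equalityI subsetI)
  fix f assume f: "f \<in> maximals (graft F0 K G)"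
  have "f \<notin> F0"
    using maximal_graft_not_base[OF fin K nonempty f] .
  then obtain k g where kg: "k \<in> K" "g \<in> G k" "f = k ++ g"
    using maximalsD(1)[OF f] by (auto elim: graftE)
  have "k \<in> F0"
    using kg(1) K maximalsD(1) by blast
  then have "g \<noteq> Map.empty"
    using \<open>f \<notin> F0\<close> kg(3) by auto
  then obtain m where m: "m \<in> maximals (G k)" "g \<subseteq>\<^sub>m m"
    using exists_maximal_above[OF fin_G[OF kg(1)] kg(2)] by blast
  have "k ++ m = f"
    using maximalsD(3)[OF f] branch_mem_graft[OF kg(1) maximalsD(1)[OF m(1)]]
      graft_le_graft_iff[OF kg(1,2) kg(1) maximalsD(1)[OF m(1)]] m(2) kg(3) by blast
  then show "f \<in> {k ++ m | k m. k \<in> K \<and> m \<in> maximals (G k)}"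
    using kg(1) m(1) by blast
next
  fix f assume "f \<in> {k ++ m | k m. k \<in> K \<and> m \<in> maximals (G k)}"
  then show "f \<in> maximals (graft F0 K G)"
    using graft_maximal_mem_maximals by blast
qed

lemma events_graft:
  assumes "K \<subseteq> F0"
  shows "events (graft F0 K G) = events F0 \<union> (\<Union>k\<in>K. events (G k))"
proof (intro equalityI subsetI)
  fix x assume "x \<in> events (graft F0 K G)"
  then obtain f where f: "f \<in> graft F0 K G" "x \<in> dom f"
    unfolding events_def by blast
  from f(1) show "x \<in> events F0 \<union> (\<Union>k\<in>K. events (G k))"
  proof (cases rule: graftE)
    case 1
    then show ?thesis
      using f(2) unfolding events_def by blast
  next
    case (2 k g)
    then have "x \<in> dom k \<or> x \<in> dom g"
      using f(2) by auto
    then show ?thesis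
    proof
      assume "x \<in> dom k"
      then have "x \<in> events F0"
        using 2(1) assms unfolding events_def by blast
      then show ?thesis
        by blast
    next
      assume "x \<in> dom g"
      then have "x \<in> events (G k)"
        using 2(2) unfolding events_def by blast
      then show ?thesis
        using 2(1) by blast
    qed
  qed
next
  fix x assume "x \<in> events F0 \<union> (\<Union>k\<in>K. events (G k))"
  then consider "x \<in> events F0" | k g where "k \<in> K" "g \<in> G k" "x \<in> dom g"
    unfolding events_def by blast
  then show "x \<in> events (graft F0 K G)"
  proof cases
    case 1
    then show ?thesis
      using graft_base unfolding events_def by blast
  next
    case 2
    then have "x \<in> dom (k ++ g)"
      by simp
    then show ?thesis
      unfolding events_def by (rule UN_I[OF branch_mem_graft[OF 2(1,2)]])
  qed
qed

lemma inputs_graft: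
  assumes "K \<subseteq> F0"
  shows "inputs (graft F0 K G) \<omega> = inputs F0 \<omega> \<union> (\<Union>k\<in>K. inputs (G k) \<omega>)"
proof (intro equalityI subsetI)
  fix v assume "v \<in> inputs (graft F0 K G) \<omega>"
  then obtain f where f: "f \<in> graft F0 K G" "f \<omega> = Some v"
    unfolding inputs_def by blast
  from f(1) show "v \<in> inputs F0 \<omega> \<union> (\<Union>k\<in>K. inputs (G k) \<omega>)"
  proof (cases rule: graftE)
    case 1
    then show ?thesis
      using f(2) unfolding inputs_def by blast
  next
    case (2 k g)
    then have "k \<omega> = Some v \<or> g \<omega> = Some v"
      using f(2) by (auto simp: map_add_Some_iff)
    then show ?thesis
    proof
      assume "k \<omega> = Some v"
      then have "v \<in> inputs F0 \<omega>"
        using 2(1) assms unfolding inputs_def by blast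
      then show ?thesis
        by blast
    next
      assume "g \<omega> = Some v"
      then have "v \<in> inputs (G k) \<omega>"
        using 2(2) unfolding inputs_def by blast
      then show ?thesis
        using 2(1) by blast
    qed
  qed
next
  fix v assume "v \<in> inputs F0 \<omega> \<union> (\<Union>k\<in>K. inputs (G k) \<omega>)"
  then consider "v \<in> inputs F0 \<omega>" | k g where "k \<in> K" "g \<in> G k" "g \<omega> = Some v"
    unfolding inputs_def by blast
  then show "v \<in> inputs (graft F0 K G) \<omega>"
  proof cases
    case 1
    then show ?thesis
      using graft_base unfolding inputs_def by blast
  next
    case 2
    then have "(k ++ g) \<omega> = Some v"
      by simp
    then show ?thesis
      unfolding inputs_def using branch_mem_graft[OF 2(1,2)] by (intro CollectI bexI)
  qed
qed

lemma free_choice_family_graft: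
  assumes fin: "finite F0" and fc: "free_choice_family F0" and K: "K = maximals F0"
    and fin_G: "\<And>k. k \<in> K \<Longrightarrow> finite (G k)" and fc_G: "\<And>k. k \<in> K \<Longrightarrow> free_choice_family (G k)"
    and events_G: "\<And>k. k \<in> K \<Longrightarrow> events (G k) = E'"
    and inputs_G: "\<And>k. k \<in> K \<Longrightarrow> inputs (G k) = I'"
  shows "free_choice_family (graft F0 K G)"
proof -
  have K_total: "K = total_maps (events F0) (inputs F0)"
    using fc K unfolding free_choice_family_def by simp
  have max_G: "maximals (G k) = total_maps E' I'" if "k \<in> K" for k
    using fc_G[OF that] events_G[OF that] inputs_G[OF that] unfolding free_choice_family_def by simp
  obtain k0 where k0: "k0 \<in> K"
    using maximals_nonempty[OF fc] K by blast
  have K_sub: "K \<subseteq> F0"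
    using K maximalsD(1) by blast
  have nonempty: "\<exists>g\<in>G k. g \<noteq> Map.empty" if "k \<in> K" for k
    using maximals_nonempty[OF fc_G[OF that]] maximalsD(1,2) by blast
  have "events F0 \<subseteq> E" "E' \<inter> E = {}"
    using dom_base dom_branch[OF k0] events_G[OF k0] unfolding events_def by blast+
  then have disjoint: "events F0 \<inter> E' = {}"
    by blast
  have "K \<noteq> {}"
    using k0 by blast
  then have events: "events (graft F0 K G) = events F0 \<union> E'"
    using events_graft[OF K_sub] events_G by simp
  have inputs: "inputs (graft F0 K G) = (\<lambda>\<omega>. inputs F0 \<omega> \<union> I' \<omega>)"
    using inputs_graft[OF K_sub] inputs_G \<open>K \<noteq> {}\<close> by (simp add: fun_eq_iff)
  have I'_outside: "I' \<omega> = {}" if "\<omega> \<notin> E'" for \<omega>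
    using that inputs_outside[of \<omega> "G k0"] events_G[OF k0] inputs_G[OF k0] by simp
  have "maximals (graft F0 K G) = {k ++ m | k m. k \<in> K \<and> m \<in> maximals (G k)}"
    using maximals_graft[OF fin K nonempty fin_G] .
  also have "\<dots> = {k ++ m | k m. k \<in> total_maps (events F0) (inputs F0) \<and> m \<in> total_maps E' I'}"
    using max_G unfolding K_total by auto
  also have "\<dots> = total_maps (events F0 \<union> E') (\<lambda>\<omega>. inputs F0 \<omega> \<union> I' \<omega>)"
    using total_maps_map_add[of "events F0" E' "inputs F0" I', OF disjoint inputs_outside I'_outside]
    by simp
  finally show ?thesis
    unfolding free_choice_family_def events inputs .
qed

lemma cseq_eq_graft:
  assumes "K = maxExt F0"
  shows "cseq F0 G = graft F0 K G"
proof -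
  have "{pjoin {k, g} | k g. k \<in> K \<and> g \<in> G k} = {k ++ g | k g. k \<in> K \<and> g \<in> G k}"
    using pjoin_pair_disjoint[OF root_branch_disjoint] by metis
  then show ?thesis
    unfolding cseq_def graft_def assms by simp
qed

lemma base_graft:
  assumes "K \<subseteq> F0"
  shows "{f \<in> graft F0 K G. dom f \<subseteq> E} = F0"
proof (intro equalityI subsetI)
  fix f assume "f \<in> {f \<in> graft F0 K G. dom f \<subseteq> E}"
  then have "f \<in> graft F0 K G" and f_dom: "dom f \<subseteq> E"
    by auto
  then show "f \<in> F0"
  proof (cases rule: graftE)
    case (2 k g)
    then have "g = Map.empty"
      using f_dom by (intro branch_empty_if_graft_le[of k g f]) simp_all
    then show ?thesis
      using 2(1,3) assms by auto
  qed
next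
  fix f assume f: "f \<in> F0"
  then show "f \<in> {f \<in> graft F0 K G. dom f \<subseteq> E}"
    using graft_base[OF f] dom_base[OF f] by simp
qed

lemma branches_graft:
  assumes "k \<in> K" "K \<subseteq> F0" "Map.empty \<in> G k"
  shows "{g. dom g \<inter> E = {} \<and> k ++ g \<in> graft F0 K G} = G k"
proof (intro equalityI subsetI)
  fix g assume "g \<in> {g. dom g \<inter> E = {} \<and> k ++ g \<in> graft F0 K G}"
  then have g: "dom g \<inter> E = {}" "k ++ g \<in> graft F0 K G"
    by auto
  from g(2) show "g \<in> G k"
  proof (cases rule: graftE)
    case 1
    have "dom (k ++ g) \<subseteq> E"
      by (rule dom_base[OF 1])
    then have "g = Map.empty"
      using g(1) by (intro empty_if_dom_disjoint_subset) auto
    then show ?thesis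
      using assms(3) by simp
  next
    case (2 k' g')
    have "k \<subseteq>\<^sub>m k ++ g"
      using g(1) dom_root[OF assms(1)] by (intro map_le_map_add_left) blast
    moreover have "k' \<subseteq>\<^sub>m k ++ g"
      using root_le_graft[OF 2(1,2)] unfolding 2(3)[symmetric] .
    ultimately have "k' = k"
      using root_unique[OF 2(1) assms(1)] by blast
    have "g = (k ++ g) |` (- E)"
      using restrict_compl_map_add[OF dom_root[OF assms(1)] g(1)] by simp
    also have "\<dots> = g'"
      using restrict_compl_map_add[OF dom_root[OF 2(1)] dom_branch[OF 2(1,2)]] 2(3) by simp
    finally show ?thesis
      using 2(2) \<open>k' = k\<close> by simp
  qed
next
  fix g assume g: "g \<in> G k"
  then show "g \<in> {g. dom g \<inter> E = {} \<and> k ++ g \<in> graft F0 K G}"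
    using dom_branch[OF assms(1) g] branch_mem_graft[OF assms(1) g] by simp
qed

end

section \<open>Sequential composition\<close>

locale sequential_composition =
  fixes \<Theta> :: "('e \<rightharpoonup> 'v) set" and \<Theta>' :: "('e \<rightharpoonup> 'v) \<Rightarrow> ('e \<rightharpoonup> 'v) set"
  assumes space: "space \<Theta>" and free_choice: "free_choice \<Theta>"
    and space': "\<And>k. k \<in> maxExt \<Theta> \<Longrightarrow> space (\<Theta>' k)"
    and free_choice': "\<And>k. k \<in> maxExt \<Theta> \<Longrightarrow> free_choice (\<Theta>' k)"
    and disjoint: "\<And>k. k \<in> maxExt \<Theta> \<Longrightarrow> events \<Theta> \<inter> events (\<Theta>' k) = {}"
    and uniform: "\<And>k1 k2. k1 \<in> maxExt \<Theta> \<Longrightarrow> k2 \<in> maxExt \<Theta> \<Longrightarrow>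
           events (\<Theta>' k1) = events (\<Theta>' k2) \<and>
           (\<forall>\<omega>\<in>events (\<Theta>' k1). inputs (\<Theta>' k1) \<omega> = inputs (\<Theta>' k2) \<omega>)"
begin

abbreviation E :: "'e set" where "E \<equiv> events \<Theta>"
abbreviation M :: "('e \<rightharpoonup> 'v) set" where "M \<equiv> maxExt \<Theta>"

definition E' :: "'e set" where "E' = (\<Union>k\<in>M. events (\<Theta>' k))"
definition I' :: "'e \<Rightarrow> 'v set" where "I' \<omega> = (\<Union>k\<in>M. inputs (\<Theta>' k) \<omega>)" for \<omega>

lemma events':
  assumes k: "k \<in> M"
  shows "events (\<Theta>' k) = E'"
proof -
  have "events (\<Theta>' k') = events (\<Theta>' k)" if "k' \<in> M" for k'
    using uniform[OF that k] by (rule conjunct1)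
  moreover have "M \<noteq> {}"
    using k by blast
  ultimately show ?thesis
    unfolding E'_def by simp
qed

lemma inputs':
  assumes k: "k \<in> M"
  shows "inputs (\<Theta>' k) = I'"
proof
  fix \<omega>
  show "inputs (\<Theta>' k) \<omega> = I' \<omega>"
  proof (cases "\<omega> \<in> E'")
    case True
    then have "inputs (\<Theta>' k') \<omega> = inputs (\<Theta>' k) \<omega>" if "k' \<in> M" for k'
      using uniform[OF that k] events'[OF that] by simp
    moreover have "M \<noteq> {}"
      using k by blast
    ultimately show ?thesis
      unfolding I'_def by simp
  next
    case False
    then have "inputs (\<Theta>' k') \<omega> = {}" if "k' \<in> M" for k'
      using inputs_outside[of \<omega> "\<Theta>' k'"] events'[OF that] by simp
    then show ?thesis
      unfolding I'_def using k by simp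
  qed
qed

lemma dom_maxExt:
  assumes "k \<in> M"
  shows "dom k = E"
proof -
  have "k \<in> total_maps E (inputs \<Theta>)"
    using assms maxExt_eq_total_maps[OF free_choice] by simp
  then show ?thesis
    unfolding total_maps_def by simp
qed

lemma maxExt':
  assumes "k \<in> M"
  shows "maxExt (\<Theta>' k) = total_maps E' I'"
  using maxExt_eq_total_maps[OF free_choice'[OF assms]] events'[OF assms] inputs'[OF assms] by simp

lemma events_disjoint: "E \<inter> E' = {}"
  using disjoint unfolding E'_def by blast

lemma graft_domainsI:
  assumes "\<And>a. a \<in> F0 \<Longrightarrow> dom a \<subseteq> E" "\<And>k g. k \<in> M \<Longrightarrow> g \<in> G k \<Longrightarrow> dom g \<subseteq> E'"
  shows "graft_domains E F0 M G"
  using assms dom_maxExt events_disjoint by unfold_locales blast+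

lemma graft_domains: "graft_domains E \<Theta> M \<Theta>'"
  by (rule graft_domainsI) (auto simp: events'[symmetric] events_def)

lemma graft_domains_joins: "graft_domains E (joins \<Theta>) M (\<lambda>k. joins (\<Theta>' k))"
  using graft_domains.graft_domains_joins[OF graft_domains] .

lemma cseq_eq_graft: "cseq \<Theta> \<Theta>' = graft \<Theta> M \<Theta>'"
  using graft_domains.cseq_eq_graft[OF graft_domains] by simp

lemma joins_cseq: "joins (cseq \<Theta> \<Theta>') = graft (joins \<Theta>) M (\<lambda>k. joins (\<Theta>' k))"
  unfolding cseq_eq_graft using graft_domains.joins_graft[OF graft_domains maxExt_subset_joins] .

lemma space_cseq: "space (cseq \<Theta> \<Theta>')"
proof -
  have "finite M"
    using space finite_joins maxExt_subset_joins finite_subset unfolding space_def by metis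
  then have "finite (graft \<Theta> M \<Theta>')"
    using space space' unfolding space_def by (intro finite_graft) auto
  moreover have "vee_prime (graft \<Theta> M \<Theta>')"
    using space space' unfolding space_def by (intro graft_domains.vee_prime_graft[OF graft_domains]) auto
  ultimately show ?thesis
    unfolding space_def cseq_eq_graft by blast
qed

lemma maximals_joins': "k \<in> M \<Longrightarrow> maximals (joins (\<Theta>' k)) = total_maps E' I'"
  using maxExt' maxExt_eq_maximals_joins empty_notin_if_space space' by metis

lemma free_choice_cseq: "free_choice (cseq \<Theta> \<Theta>')"
proof -
  have "free_choice_family (graft (joins \<Theta>) M (\<lambda>k. joins (\<Theta>' k)))"
  proof (rule graft_domains.free_choice_family_graft[OF graft_domains_joins])
    show "finite (joins \<Theta>)"
      using space finite_joins unfolding space_def by blast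
    show "free_choice_family (joins \<Theta>)"
      using free_choice free_choice_iff_joins empty_notin_if_space[OF space] by blast
    show "M = maximals (joins \<Theta>)"
      using maxExt_eq_maximals_joins empty_notin_if_space[OF space] by blast
    fix k assume k: "k \<in> M"
    show "finite (joins (\<Theta>' k))"
      using space'[OF k] finite_joins unfolding space_def by blast
    show "free_choice_family (joins (\<Theta>' k))"
      using free_choice'[OF k] free_choice_iff_joins empty_notin_if_space[OF space'[OF k]] by blast
    show "events (joins (\<Theta>' k)) = E'"
      unfolding events_joins by (rule events'[OF k])
    show "inputs (joins (\<Theta>' k)) = I'"
      unfolding inputs_joins by (rule inputs'[OF k])
  qed
  then show ?thesis
    using free_choice_iff_joins empty_notin_if_space[OF space_cseq] joins_cseq by metis
qed

lemma maxExt_cseq: "maxExt (cseq \<Theta> \<Theta>') = {k ++ m | k m. k \<in> M \<and> m \<in> total_maps E' I'}"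
proof -
  have "maxExt (cseq \<Theta> \<Theta>') = maximals (graft (joins \<Theta>) M (\<lambda>k. joins (\<Theta>' k)))"
    using maxExt_eq_maximals_joins empty_notin_if_space[OF space_cseq] joins_cseq by metis
  also have "\<dots> = {k ++ m | k m. k \<in> M \<and> m \<in> maximals (joins (\<Theta>' k))}"
  proof (rule graft_domains.maximals_graft[OF graft_domains_joins])
    show "finite (joins \<Theta>)"
      using space finite_joins unfolding space_def by blast
    show "M = maximals (joins \<Theta>)"
      using maxExt_eq_maximals_joins empty_notin_if_space[OF space] by blast
    fix k assume k: "k \<in> M"
    show "finite (joins (\<Theta>' k))"
      using space'[OF k] finite_joins unfolding space_def by blast
    show "\<exists>g\<in>joins (\<Theta>' k). g \<noteq> Map.empty"
      using maximals_nonempty free_choice'[OF k] free_choice_iff_joins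
        empty_notin_if_space[OF space'[OF k]] maximalsD(1,2) by (metis all_not_in_conv)
  qed
  also have "\<dots> = {k ++ m | k m. k \<in> M \<and> m \<in> total_maps E' I'}"
    using maximals_joins' by auto
  finally show ?thesis .
qed

lemma M_subset_joins_cseq: "M \<subseteq> joins (cseq \<Theta> \<Theta>')"
proof -
  have "joins \<Theta> \<subseteq> graft (joins \<Theta>) M (\<lambda>k. joins (\<Theta>' k))"
    by (auto intro: graft_base)
  then show ?thesis
    using maxExt_subset_joins unfolding joins_cseq by blast
qed

lemma graft_domains_cc:
  assumes "cc_family \<Theta> F0" "below_maxExt \<Theta> F0"
    and "\<And>k. k \<in> M \<Longrightarrow> cc_family (\<Theta>' k) (G k)" "\<And>k. k \<in> M \<Longrightarrow> below_maxExt (\<Theta>' k) (G k)"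
  shows "graft_domains E F0 M G"
proof (rule graft_domainsI)
  fix a assume "a \<in> F0"
  moreover have "events F0 = E"
    using events_eq_if_below[OF cc_familyD(5)[OF assms(1)] assms(2) space] .
  ultimately show "dom a \<subseteq> E"
    unfolding events_def by blast
next
  fix k g assume k: "k \<in> M" and "g \<in> G k"
  moreover have "events (G k) = E'"
    using events_eq_if_below[OF cc_familyD(5)[OF assms(3)[OF k]] assms(4)[OF k] space'[OF k]] events'[OF k]
    by simp
  ultimately show "dom g \<subseteq> E'"
    unfolding events_def by blast
qed

lemma cc_family_graft:
  assumes F0: "cc_family \<Theta> F0" "below_maxExt \<Theta> F0"
    and G: "\<And>k. k \<in> M \<Longrightarrow> cc_family (\<Theta>' k) (G k)" "\<And>k. k \<in> M \<Longrightarrow> below_maxExt (\<Theta>' k) (G k)"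
  shows "cc_family (cseq \<Theta> \<Theta>') (graft F0 M G)"
proof -
  interpret graft_domains E F0 M G
    using graft_domains_cc[OF assms] .
  note F0_facts = cc_familyD[OF F0(1)] and G_facts = cc_familyD[OF G(1)]
  have M: "M = maximals F0"
    using maximals_eq_maxExt[OF F0_facts(5) F0(2) space] by simp
  then have M_sub: "M \<subseteq> F0"
    using maximalsD(1) by blast
  have "finite (graft F0 M G)"
    by (intro finite_graft F0_facts(1) finite_subset[OF M_sub F0_facts(1)] G_facts(1))
  moreover have "join_closed (graft F0 M G)"
    using F0_facts(2) G_facts(2) by (rule join_closed_graft)
  moreover have "accessible (graft F0 M G)"
    using F0_facts(3) M_sub G_facts(3) by (rule accessible_graft)
  moreover have "free_choice_family (graft F0 M G)"
  proof (rule free_choice_family_graft[OF F0_facts(1,4) M G_facts(1,4)])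
    fix k assume k: "k \<in> M"
    show "events (G k) = E'"
      using events_eq_if_below[OF G_facts(5)[OF k] G(2)[OF k] space'[OF k]] events'[OF k] by simp
    show "inputs (G k) = I'"
      using inputs_eq_if_below[OF G_facts(5)[OF k] G(2)[OF k] space'[OF k]] inputs'[OF k] by simp
  qed
  moreover have "joins (cseq \<Theta> \<Theta>') \<subseteq> graft F0 M G"
    unfolding joins_cseq using F0_facts(5) G_facts(5) by (rule graft_mono)
  ultimately show ?thesis
    unfolding cc_family_def by blast
qed

definition base :: "('e \<rightharpoonup> 'v) set \<Rightarrow> ('e \<rightharpoonup> 'v) set" where
  "base F = {f \<in> F. dom f \<subseteq> E}"

definition continuation :: "('e \<rightharpoonup> 'v) set \<Rightarrow> ('e \<rightharpoonup> 'v) \<Rightarrow> ('e \<rightharpoonup> 'v) set" where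
  "continuation F k = {g. dom g \<inter> E = {} \<and> k ++ g \<in> F}"

definition stratified_part :: "('e \<rightharpoonup> 'v) set \<Rightarrow> ('e \<rightharpoonup> 'v) set" where
  "stratified_part F = {f \<in> F. dom f \<subseteq> E \<or> (\<exists>k\<in>M. k \<subseteq>\<^sub>m f)}"

lemma graft_base_continuation: "graft (base F) M (continuation F) = stratified_part F"
proof (intro equalityI subsetI)
  fix f assume "f \<in> graft (base F) M (continuation F)"
  then show "f \<in> stratified_part F"
  proof (cases rule: graftE)
    case 1
    then show ?thesis
      unfolding base_def stratified_part_def by blast
  next
    case (2 k g)
    then have "dom g \<inter> E = {}" "f \<in> F"
      unfolding continuation_def by auto
    then have "k \<subseteq>\<^sub>m f"
      unfolding 2(3) by (intro map_le_map_add_left) (simp add: dom_maxExt[OF 2(1)] Int_commute)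
    then show ?thesis
      unfolding stratified_part_def using \<open>f \<in> F\<close> 2(1) by (intro CollectI conjI disjI2 bexI)
  qed
next
  fix f assume "f \<in> stratified_part F"
  then have f: "f \<in> F" "dom f \<subseteq> E \<or> (\<exists>k\<in>M. k \<subseteq>\<^sub>m f)"
    unfolding stratified_part_def by auto
  from f(2) show "f \<in> graft (base F) M (continuation F)"
  proof
    assume "dom f \<subseteq> E"
    then show ?thesis
      by (intro graft_base) (simp add: base_def f(1))
  next
    assume "\<exists>k\<in>M. k \<subseteq>\<^sub>m f"
    then obtain k where k: "k \<in> M" "k \<subseteq>\<^sub>m f"
      by blast
    have eq: "k ++ f |` (- E) = f"
      using map_add_restrict_compl[OF k(2) dom_maxExt[OF k(1)]] .
    then have "f |` (- E) \<in> continuation F k"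
      using f(1) unfolding continuation_def by auto
    then have "k ++ f |` (- E) \<in> graft (base F) M (continuation F)"
      by (rule graft_branch[where G = "continuation F", OF k(1)])
    then show ?thesis
      using eq by simp
  qed
qed

lemma base_of_graft:
  assumes "graft_domains E F0 M G" "M \<subseteq> F0"
  shows "base (graft F0 M G) = F0"
  unfolding base_def using graft_domains.base_graft[OF assms] .

lemma continuation_of_graft:
  assumes "graft_domains E F0 M G" "M \<subseteq> F0" "k \<in> M" "Map.empty \<in> G k"
  shows "continuation (graft F0 M G) k = G k"
  unfolding continuation_def using graft_domains.branches_graft[OF assms(1,3,2,4)] .

lemma stratified_part_subset: "stratified_part F \<subseteq> F"
  unfolding stratified_part_def by blast

lemma join_closed_stratified_part:
  assumes "join_closed F"
  shows "join_closed (stratified_part F)"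
proof (rule join_closedI)
  fix f assume cov: "covers (stratified_part F) f"
  have "f \<in> F"
    using join_closedD[OF assms covers_mono[OF cov stratified_part_subset]] .
  show "f \<in> stratified_part F"
  proof (cases "\<exists>k\<in>M. k \<subseteq>\<^sub>m f")
    case False
    have "dom f \<subseteq> E"
    proof
      fix x assume "x \<in> dom f"
      then obtain g where g: "g \<in> stratified_part F" "g \<subseteq>\<^sub>m f" "x \<in> dom g"
        using cov coversE by metis
      have "\<not> (\<exists>k\<in>M. k \<subseteq>\<^sub>m g)"
        using False g(2) map_le_trans by blast
      then have "dom g \<subseteq> E"
        using g(1) unfolding stratified_part_def by blast
      then show "x \<in> E"
        using g(3) by blast
    qed
    then show ?thesis
      using \<open>f \<in> F\<close> unfolding stratified_part_def by blast
  qed (use \<open>f \<in> F\<close> in \<open>auto simp: stratified_part_def\<close>)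
qed

text \<open>Removing a point outside \<open>E\<close> from a map above a root \<open>k\<close> leaves a map covered by \<open>k\<close>
  and by a smaller element of the accessible family.\<close>

lemma accessible_stratified_part:
  assumes "finite F" "accessible F" "join_closed F" "M \<subseteq> F"
  shows "accessible (stratified_part F)"
  unfolding accessible_def
proof (intro ballI impI)
  fix f assume f: "f \<in> stratified_part F" "f \<noteq> Map.empty"
  then have "f \<in> F"
    unfolding stratified_part_def by blast
  show "\<exists>x\<in>dom f. f(x := None) \<in> stratified_part F"
  proof (cases "dom f \<subseteq> E")
    case True
    obtain x where "x \<in> dom f" "f(x := None) \<in> F"
      using assms(2) \<open>f \<in> F\<close> f(2) unfolding accessible_def by blast
    moreover have "dom (f(x := None)) \<subseteq> E"
      using True by auto
    ultimately show ?thesis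
      unfolding stratified_part_def by blast
  next
    case False
    then obtain k where k: "k \<in> M" "k \<subseteq>\<^sub>m f"
      using f(1) unfolding stratified_part_def by blast
    obtain x f' where x: "x \<in> dom f - E" and f': "f' \<in> F" "f' \<subseteq>\<^sub>m f" "dom f' - E = dom f - E - {x}"
      using accessible_remove_outside[OF assms(1,2) \<open>f \<in> F\<close> False] by blast
    have "x \<notin> dom f'"
      using x f'(3) by blast
    with f'(2) have f'_le: "f' \<subseteq>\<^sub>m f(x := None)"
      by (rule map_le_fun_upd_None)
    have k_le: "k \<subseteq>\<^sub>m f(x := None)"
      using k(2) x dom_maxExt[OF k(1)] by (intro map_le_fun_upd_None) auto
    have "covers F (f(x := None))"
    proof (rule coversI)
      fix y assume y: "y \<in> dom (f(x := None))"
      show "\<exists>h\<in>F. h \<subseteq>\<^sub>m f(x := None) \<and> y \<in> dom h"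
      proof (cases "y \<in> E")
        case True
        then show ?thesis
          using k_le k(1) assms(4) dom_maxExt[OF k(1)] by (intro bexI[of _ k] conjI) auto
      next
        case False
        then have "y \<in> dom f'"
          using y f'(3) by auto
        then show ?thesis
          using f'_le f'(1) by (intro bexI[of _ f'] conjI)
      qed
    qed
    then have "f(x := None) \<in> stratified_part F"
      using join_closedD[OF assms(3)] k(1) k_le unfolding stratified_part_def by blast
    then show ?thesis
      using x by blast
  qed
qed

lemma cc_family_stratified_part:
  assumes F: "cc_family (cseq \<Theta> \<Theta>') F" and below: "below_maxExt (cseq \<Theta> \<Theta>') F"
  shows "cc_family (cseq \<Theta> \<Theta>') (stratified_part F)"
proof -
  note F_facts = cc_familyD[OF F]
  have "M \<subseteq> F"
    using M_subset_joins_cseq F_facts(5) by blast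
  have joins_sub: "joins (cseq \<Theta> \<Theta>') \<subseteq> stratified_part F"
  proof
    fix f assume f: "f \<in> joins (cseq \<Theta> \<Theta>')"
    then have "f \<in> graft (joins \<Theta>) M (\<lambda>k. joins (\<Theta>' k))"
      unfolding joins_cseq .
    then have "dom f \<subseteq> E \<or> (\<exists>k\<in>M. k \<subseteq>\<^sub>m f)"
    proof (cases rule: graftE)
      case 1
      then show ?thesis
        using graft_domains.dom_base[OF graft_domains_joins] by blast
    next
      case (2 k g)
      then show ?thesis
        using graft_domains.root_le_graft[OF graft_domains_joins] by blast
    qed
    then show "f \<in> stratified_part F"
      using f F_facts(5) unfolding stratified_part_def by blast
  qed
  moreover have "free_choice_family (stratified_part F)"
    using below_maxExt_subset[OF below stratified_part_subset] joins_sub space_cseq free_choice_cseq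
    by (intro free_choice_family_if_below)
  moreover have "finite (stratified_part F)"
    using finite_subset[OF stratified_part_subset F_facts(1)] .
  ultimately show ?thesis
    unfolding cc_family_def
    using join_closed_stratified_part[OF F_facts(2)] accessible_stratified_part[OF F_facts(1,3,2) \<open>M \<subseteq> F\<close>]
    by blast
qed

lemma maxExt_cseqE:
  assumes "m \<in> maxExt (cseq \<Theta> \<Theta>')"
  obtains k m' where "k \<in> M" "m' \<in> total_maps E' I'" "m = k ++ m'" "dom m' \<inter> dom k = {}"
proof -
  obtain k m' where km: "k \<in> M" "m' \<in> total_maps E' I'" "m = k ++ m'"
    using assms unfolding maxExt_cseq by blast
  moreover have "dom m' \<inter> dom k = {}"
    using km(1,2) dom_maxExt events_disjoint unfolding total_maps_def by auto
  ultimately show ?thesis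
    using that by blast
qed

lemma below_maxExt_base:
  assumes "below_maxExt (cseq \<Theta> \<Theta>') F"
  shows "below_maxExt \<Theta> (base F)"
  unfolding below_maxExt_def
proof
  fix f assume "f \<in> base F"
  then have f: "f \<in> F" "dom f \<subseteq> E"
    unfolding base_def by auto
  obtain m where m: "m \<in> maxExt (cseq \<Theta> \<Theta>')" "f \<subseteq>\<^sub>m m"
    using assms f(1) unfolding below_maxExt_def by blast
  obtain k m' where km: "k \<in> M" "m = k ++ m'" "dom m' \<inter> dom k = {}"
    using m(1) by (rule maxExt_cseqE)
  have "f \<subseteq>\<^sub>m k"
    using m(2)[unfolded km(2)] _ km(3) by (rule map_le_of_map_add_left) (simp add: f(2) dom_maxExt[OF km(1)])
  then show "\<exists>m\<in>M. f \<subseteq>\<^sub>m m"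
    using km(1) by blast
qed

lemma cc_family_base:
  assumes F: "cc_family (cseq \<Theta> \<Theta>') F" and below: "below_maxExt (cseq \<Theta> \<Theta>') F"
  shows "cc_family \<Theta> (base F)"
proof -
  note F_facts = cc_familyD[OF F]
  have sub: "base F \<subseteq> F"
    unfolding base_def by blast
  have "join_closed (base F)"
  proof (rule join_closedI)
    fix f assume cov: "covers (base F) f"
    then have "f \<in> F"
      using join_closedD[OF F_facts(2)] covers_mono[OF cov sub] by blast
    moreover have "dom f \<subseteq> E"
      using cov by (rule dom_subset_if_covers) (simp add: base_def)
    ultimately show "f \<in> base F"
      unfolding base_def by blast
  qed
  moreover have "accessible (base F)"
    unfolding accessible_def
  proof (intro ballI impI)
    fix f assume f: "f \<in> base F" "f \<noteq> Map.empty"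
    then obtain x where "x \<in> dom f" "f(x := None) \<in> F"
      using F_facts(3) sub unfolding accessible_def by blast
    moreover have "dom (f(x := None)) \<subseteq> E"
      using f(1) unfolding base_def by auto
    ultimately show "\<exists>x\<in>dom f. f(x := None) \<in> base F"
      unfolding base_def by blast
  qed
  moreover have joins_sub: "joins \<Theta> \<subseteq> base F"
  proof
    fix f assume f: "f \<in> joins \<Theta>"
    then have "f \<in> joins (cseq \<Theta> \<Theta>')"
      unfolding joins_cseq by (rule graft_base)
    moreover have "dom f \<subseteq> E"
      using f dom_subset_events_if_covers unfolding joins_def by blast
    ultimately show "f \<in> base F"
      using F_facts(5) unfolding base_def by blast
  qed
  moreover have "free_choice_family (base F)"
    using joins_sub below_maxExt_base[OF below] space free_choice by (rule free_choice_family_if_below)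
  moreover have "finite (base F)"
    using finite_subset[OF sub F_facts(1)] .
  ultimately show ?thesis
    unfolding cc_family_def by blast
qed

lemma below_maxExt_continuation:
  assumes "below_maxExt (cseq \<Theta> \<Theta>') F" "k \<in> M"
  shows "below_maxExt (\<Theta>' k) (continuation F k)"
  unfolding below_maxExt_def
proof
  fix g assume "g \<in> continuation F k"
  then have g: "dom g \<inter> E = {}" "k ++ g \<in> F"
    unfolding continuation_def by auto
  have disj: "dom g \<inter> dom k = {}"
    using g(1) dom_maxExt[OF assms(2)] by blast
  obtain m where m: "m \<in> maxExt (cseq \<Theta> \<Theta>')" "k ++ g \<subseteq>\<^sub>m m"
    using assms(1) g(2) unfolding below_maxExt_def by blast
  obtain k' m' where km: "k' \<in> M" "m' \<in> total_maps E' I'" "m = k' ++ m'" "dom m' \<inter> dom k' = {}"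
    using m(1) by (rule maxExt_cseqE)
  have "k \<subseteq>\<^sub>m m"
    using map_le_map_add_left[of k g] disj m(2) map_le_trans by blast
  moreover have "k' \<subseteq>\<^sub>m m"
    unfolding km(3) using km(4) by (intro map_le_map_add_left) blast
  ultimately have "k' = k"
    using map_le_same_dom dom_maxExt[OF assms(2)] dom_maxExt[OF km(1)] by metis
  have "g \<subseteq>\<^sub>m k ++ m'"
    using map_le_trans[OF map_le_map_add m(2)] km(3) \<open>k' = k\<close> by simp
  then have "g \<subseteq>\<^sub>m m'"
    using disj by (rule map_le_of_map_add_right)
  moreover have "m' \<in> maxExt (\<Theta>' k)"
    using km(2) maxExt'[OF assms(2)] by simp
  ultimately show "\<exists>m\<in>maxExt (\<Theta>' k). g \<subseteq>\<^sub>m m"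
    by blast
qed

lemma finite_continuation:
  assumes "finite F" "k \<in> M"
  shows "finite (continuation F k)"
proof -
  have "continuation F k \<subseteq> (\<lambda>f. f |` (- E)) ` F"
  proof
    fix g assume "g \<in> continuation F k"
    then have "dom g \<inter> E = {}" "k ++ g \<in> F"
      unfolding continuation_def by auto
    then show "g \<in> (\<lambda>f. f |` (- E)) ` F"
      using restrict_compl_map_add[OF dom_maxExt[OF assms(2)]] by (metis image_eqI)
  qed
  then show ?thesis
    using assms(1) finite_surj by blast
qed

lemma join_closed_continuation:
  assumes closed: "join_closed F" and "k \<in> F" "k \<in> M"
  shows "join_closed (continuation F k)"
proof (rule join_closedI)
  fix g assume cov: "covers (continuation F k) g"
  have "dom g \<inter> E = {}"
    using cov by (rule covers_disjoint) (simp add: continuation_def)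
  then have disj: "dom g \<inter> dom k = {}"
    using dom_maxExt[OF assms(3)] by blast
  have "covers F (k ++ g)"
  proof (rule coversI)
    fix y assume y: "y \<in> dom (k ++ g)"
    show "\<exists>h\<in>F. h \<subseteq>\<^sub>m k ++ g \<and> y \<in> dom h"
    proof (cases "y \<in> dom g")
      case True
      then obtain g' where g': "g' \<in> continuation F k" "g' \<subseteq>\<^sub>m g" "y \<in> dom g'"
        using cov coversE by metis
      have "k ++ g' \<subseteq>\<^sub>m k ++ g"
        using g'(2) disj by (rule map_add_mono_right)
      then show ?thesis
        using g'(1,3) unfolding continuation_def by (intro bexI[of _ "k ++ g'"] conjI) auto
    next
      case False
      have "k \<subseteq>\<^sub>m k ++ g"
        using disj by (intro map_le_map_add_left) blast
      then show ?thesis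
        using False y assms(2) by (intro bexI[of _ k] conjI) auto
    qed
  qed
  then show "g \<in> continuation F k"
    using join_closedD[OF closed] \<open>dom g \<inter> E = {}\<close> unfolding continuation_def by blast
qed

text \<open>Accessibility of a continuation uses stratification: removing a point of \<open>E\<close> from
  \<open>k ++ g\<close> with \<open>g\<close> nonempty would leave a map that is neither inside \<open>E\<close> nor above a root.\<close>

lemma accessible_continuation:
  assumes acc: "accessible F" and stratified: "stratified_part F = F" and k: "k \<in> M"
  shows "accessible (continuation F k)"
  unfolding accessible_def
proof (intro ballI impI)
  fix g assume "g \<in> continuation F k" "g \<noteq> Map.empty"
  then have g: "dom g \<inter> E = {}" "k ++ g \<in> F" "k ++ g \<noteq> Map.empty"
    unfolding continuation_def by auto
  obtain x where x: "x \<in> dom (k ++ g)" "(k ++ g)(x := None) \<in> F"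
    using mp[OF bspec[OF acc[unfolded accessible_def] g(2)] g(3)] by (rule bexE)
  have "x \<notin> E"
  proof
    assume "x \<in> E"
    obtain y where "y \<in> dom g"
      using \<open>g \<noteq> Map.empty\<close> by fastforce
    then have "y \<in> dom ((k ++ g)(x := None))" "y \<notin> E"
      using g(1) \<open>x \<in> E\<close> by auto
    moreover have "dom ((k ++ g)(x := None)) \<subseteq> E \<or> (\<exists>k'\<in>M. k' \<subseteq>\<^sub>m (k ++ g)(x := None))"
      using x(2) stratified unfolding stratified_part_def by blast
    ultimately obtain k' where "k' \<in> M" "k' \<subseteq>\<^sub>m (k ++ g)(x := None)"
      by blast
    then have "x \<in> dom ((k ++ g)(x := None))"
      using \<open>x \<in> E\<close> dom_maxExt map_le_implies_dom_le by blast
    then show False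
      by simp
  qed
  then have "x \<notin> dom k" "x \<in> dom g"
    using x(1) dom_maxExt[OF k] by auto
  then have "(k ++ g)(x := None) = k ++ g(x := None)"
    by (simp add: map_add_upd_None)
  then have "g(x := None) \<in> continuation F k"
    using x(2) g(1) unfolding continuation_def by auto
  then show "\<exists>x\<in>dom g. g(x := None) \<in> continuation F k"
    using \<open>x \<in> dom g\<close> by blast
qed

lemma cc_family_continuation:
  assumes F: "cc_family (cseq \<Theta> \<Theta>') F" "below_maxExt (cseq \<Theta> \<Theta>') F"
    and stratified: "stratified_part F = F" and k: "k \<in> M"
  shows "cc_family (\<Theta>' k) (continuation F k)"
proof -
  note F_facts = cc_familyD[OF F(1)]
  have "k \<in> F"
    using k M_subset_joins_cseq F_facts(5) by blast
  have joins_sub: "joins (\<Theta>' k) \<subseteq> continuation F k"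
  proof
    fix g assume g: "g \<in> joins (\<Theta>' k)"
    then have "k ++ g \<in> joins (cseq \<Theta> \<Theta>')"
      unfolding joins_cseq by (rule graft_branch[where G = "\<lambda>k. joins (\<Theta>' k)", OF k])
    moreover have "dom g \<inter> E = {}"
      using graft_domains.dom_branch[OF graft_domains_joins k g] .
    ultimately show "g \<in> continuation F k"
      using F_facts(5) unfolding continuation_def by blast
  qed
  moreover have "free_choice_family (continuation F k)"
    using joins_sub below_maxExt_continuation[OF F(2) k] space'[OF k] free_choice'[OF k]
    by (rule free_choice_family_if_below)
  ultimately show ?thesis
    unfolding cc_family_def
    using finite_continuation[OF F_facts(1) k] join_closed_continuation[OF F_facts(2) \<open>k \<in> F\<close> k]
      accessible_continuation[OF F_facts(3) stratified k]
    by blast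
qed

lemma stratified_part_if_minimal:
  assumes "minimal_cc_family (cseq \<Theta> \<Theta>') F"
  shows "stratified_part F = F"
  using minimal_cc_familyD(2)[OF assms cc_family_stratified_part stratified_part_subset]
    minimal_cc_familyD(1)[OF assms] below_maxExt_if_minimal[OF assms space_cseq free_choice_cseq]
  by blast

lemma cc_family_parts_if_minimal:
  assumes min: "minimal_cc_family (cseq \<Theta> \<Theta>') F"
  shows "cc_family \<Theta> (base F)" "below_maxExt \<Theta> (base F)"
    and "k \<in> M \<Longrightarrow> cc_family (\<Theta>' k) (continuation F k)"
    and "k \<in> M \<Longrightarrow> below_maxExt (\<Theta>' k) (continuation F k)"
proof -
  have F: "cc_family (cseq \<Theta> \<Theta>') F" "below_maxExt (cseq \<Theta> \<Theta>') F"
    using minimal_cc_familyD(1)[OF min] below_maxExt_if_minimal[OF min space_cseq free_choice_cseq] .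
  show "cc_family \<Theta> (base F)" "below_maxExt \<Theta> (base F)"
    using cc_family_base[OF F] below_maxExt_base[OF F(2)] .
  show "cc_family (\<Theta>' k) (continuation F k)" "below_maxExt (\<Theta>' k) (continuation F k)" if "k \<in> M"
    using cc_family_continuation[OF F stratified_part_if_minimal[OF min] that]
      below_maxExt_continuation[OF F(2) that] .
qed

lemma minimal_cc_family_base:
  assumes min: "minimal_cc_family (cseq \<Theta> \<Theta>') F"
  shows "minimal_cc_family \<Theta> (base F)"
  unfolding minimal_cc_family_def
proof (intro conjI allI impI)
  note parts = cc_family_parts_if_minimal[OF min]
  fix F0 assume F0: "cc_family \<Theta> F0" "F0 \<subseteq> base F"
  have below0: "below_maxExt \<Theta> F0"
    using below_maxExt_subset[OF parts(2) F0(2)] .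
  have "graft F0 M (continuation F) \<subseteq> graft (base F) M (continuation F)"
    using F0(2) by (rule graft_mono) simp
  then have "graft F0 M (continuation F) \<subseteq> F"
    using graft_base_continuation stratified_part_subset by blast
  then have "graft F0 M (continuation F) = F"
    using minimal_cc_familyD(2)[OF min cc_family_graft[OF F0(1) below0 parts(3,4)]] by blast
  moreover have "M \<subseteq> F0"
    using maxExt_subset_joins cc_familyD(5)[OF F0(1)] by blast
  ultimately show "F0 = base F"
    using base_of_graft[OF graft_domains_cc[OF F0(1) below0 parts(3,4)]] by simp
qed (rule cc_family_parts_if_minimal(1)[OF min])

lemma minimal_cc_family_continuation:
  assumes min: "minimal_cc_family (cseq \<Theta> \<Theta>') F" and k: "k \<in> M"
  shows "minimal_cc_family (\<Theta>' k) (continuation F k)"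
  unfolding minimal_cc_family_def
proof (intro conjI allI impI)
  note parts = cc_family_parts_if_minimal[OF min]
  fix G' assume G': "cc_family (\<Theta>' k) G'" "G' \<subseteq> continuation F k"
  define G where "G = (continuation F)(k := G')"
  have G: "cc_family (\<Theta>' k') (G k')" "below_maxExt (\<Theta>' k') (G k')" if "k' \<in> M" for k'
    using parts(3,4)[OF that] G' below_maxExt_subset[OF parts(4)[OF k] G'(2)] unfolding G_def by auto
  have "graft (base F) M G \<subseteq> graft (base F) M (continuation F)"
    using G'(2) unfolding G_def by (intro graft_mono) auto
  then have "graft (base F) M G \<subseteq> F"
    using graft_base_continuation stratified_part_subset by blast
  then have "graft (base F) M G = F"
    using minimal_cc_familyD(2)[OF min cc_family_graft[OF parts(1,2) G]] by blast
  moreover have "M \<subseteq> base F"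
    using maxExt_subset_joins cc_familyD(5)[OF parts(1)] by blast
  moreover have "Map.empty \<in> G k"
    using join_closed_empty[OF cc_familyD(2)[OF G(1)[OF k]]] .
  ultimately have "continuation F k = G k"
    using continuation_of_graft[OF graft_domains_cc[OF parts(1,2) G] _ k] by simp
  then show "G' = continuation F k"
    unfolding G_def by simp
qed (rule cc_family_parts_if_minimal(3)[OF min k])

lemma minimal_cc_family_graft:
  assumes F0: "minimal_cc_family \<Theta> F0" and G: "\<And>k. k \<in> M \<Longrightarrow> minimal_cc_family (\<Theta>' k) (G k)"
  shows "minimal_cc_family (cseq \<Theta> \<Theta>') (graft F0 M G)"
  unfolding minimal_cc_family_def
proof (intro conjI allI impI)
  have F0_cc: "cc_family \<Theta> F0" "below_maxExt \<Theta> F0"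
    using minimal_cc_familyD(1)[OF F0] below_maxExt_if_minimal[OF F0 space free_choice] .
  have G_cc: "cc_family (\<Theta>' k) (G k)" "below_maxExt (\<Theta>' k) (G k)" if "k \<in> M" for k
    using minimal_cc_familyD(1)[OF G[OF that]] below_maxExt_if_minimal[OF G[OF that] space'[OF that] free_choice'[OF that]] .
  have domains: "graft_domains E F0 M G"
    by (rule graft_domains_cc) (use F0_cc G_cc in auto)
  have M_sub: "M \<subseteq> F0"
    using maxExt_subset_joins cc_familyD(5)[OF F0_cc(1)] by blast
  show "cc_family (cseq \<Theta> \<Theta>') (graft F0 M G)"
    using cc_family_graft[OF F0_cc G_cc] .
  fix F2 assume F2: "cc_family (cseq \<Theta> \<Theta>') F2" "F2 \<subseteq> graft F0 M G"
  define F3 where "F3 = stratified_part {f \<in> F2. \<exists>m\<in>maxExt (cseq \<Theta> \<Theta>'). f \<subseteq>\<^sub>m m}"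
  have F3_sub: "F3 \<subseteq> F2"
    using stratified_part_subset unfolding F3_def by blast
  have below3: "below_maxExt (cseq \<Theta> \<Theta>') {f \<in> F2. \<exists>m\<in>maxExt (cseq \<Theta> \<Theta>'). f \<subseteq>\<^sub>m m}"
    unfolding below_maxExt_def by blast
  have F3: "cc_family (cseq \<Theta> \<Theta>') F3" "below_maxExt (cseq \<Theta> \<Theta>') F3"
    unfolding F3_def
    using cc_family_stratified_part[OF cc_family_below_maxExt_part[OF F2(1) space_cseq free_choice_cseq] below3]
      below_maxExt_subset[OF below3 stratified_part_subset] by auto
  have stratified3: "stratified_part F3 = F3"
    unfolding F3_def stratified_part_def by blast
  have "base F3 \<subseteq> base (graft F0 M G)"
    using F3_sub F2(2) unfolding base_def by blast
  then have "base F3 = F0"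
    using minimal_cc_familyD(2)[OF F0 cc_family_base[OF F3]] base_of_graft[OF domains M_sub] by simp
  moreover have "continuation F3 k = G k" if k: "k \<in> M" for k
  proof -
    have "Map.empty \<in> G k"
      using join_closed_empty[OF cc_familyD(2)[OF G_cc(1)[OF k]]] .
    then have "continuation F3 k \<subseteq> G k"
      using F3_sub F2(2) continuation_of_graft[OF domains M_sub k]
      unfolding continuation_def by blast
    then show ?thesis
      using minimal_cc_familyD(2)[OF G[OF k] cc_family_continuation[OF F3 stratified3 k]] by simp
  qed
  ultimately have "graft F0 M G = F3"
    using graft_base_continuation[of F3] stratified3 graft_cong[of M G "continuation F3"] by simp
  then show "F2 = graft F0 M G"
    using F2(2) F3_sub by blast
qed

lemma cseq_of_CC:
  assumes "\<Theta>h \<in> CC \<Theta>" "\<And>k. k \<in> M \<Longrightarrow> \<Theta>h' k \<in> CC (\<Theta>' k)"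
  shows "space (cseq \<Theta>h \<Theta>h')" "joins (cseq \<Theta>h \<Theta>h') = graft (joins \<Theta>h) M (\<lambda>k. joins (\<Theta>h' k))"
proof -
  have h: "space \<Theta>h" "minimal_cc_family \<Theta> (joins \<Theta>h)"
    using assms(1) CC_eq_minimal_cc_families[OF empty_notin_if_space[OF space]] by auto
  have h': "space (\<Theta>h' k)" "minimal_cc_family (\<Theta>' k) (joins (\<Theta>h' k))" if "k \<in> M" for k
    using assms(2)[OF that] CC_eq_minimal_cc_families[OF empty_notin_if_space[OF space'[OF that]]] by auto
  have cc: "cc_family \<Theta> (joins \<Theta>h)" "below_maxExt \<Theta> (joins \<Theta>h)"
    using minimal_cc_familyD(1)[OF h(2)] below_maxExt_if_minimal[OF h(2) space free_choice] .
  have cc': "cc_family (\<Theta>' k) (joins (\<Theta>h' k))" "below_maxExt (\<Theta>' k) (joins (\<Theta>h' k))" if "k \<in> M" for k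
    using minimal_cc_familyD(1)[OF h'(2)[OF that]]
      below_maxExt_if_minimal[OF h'(2)[OF that] space'[OF that] free_choice'[OF that]] .
  have maxExt_h: "maxExt \<Theta>h = M"
    using maxExt_eq_maximals_joins[OF empty_notin_if_space[OF h(1)]]
      maximals_eq_maxExt[OF cc_familyD(5)[OF cc(1)] cc(2) space] by simp
  have "graft_domains E (joins \<Theta>h) M (\<lambda>k. joins (\<Theta>h' k))"
    by (rule graft_domains_cc) (use cc cc' in auto)
  then have domains: "graft_domains E \<Theta>h M \<Theta>h'"
    by (rule graft_domains.graft_domains_mono) (simp_all add: subset_joins)
  have cseq_eq: "cseq \<Theta>h \<Theta>h' = graft \<Theta>h M \<Theta>h'"
    using graft_domains.cseq_eq_graft[OF domains] maxExt_h by simp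
  show "space (cseq \<Theta>h \<Theta>h')"
  proof -
    have "finite \<Theta>h"
      using h(1) unfolding space_def by simp
    then have "finite M"
      using finite_subset[OF maxExt_subset_joins finite_joins] maxExt_h by metis
    then have "finite (graft \<Theta>h M \<Theta>h')"
      using \<open>finite \<Theta>h\<close> h'(1) unfolding space_def by (intro finite_graft) auto
    moreover have "vee_prime (graft \<Theta>h M \<Theta>h')"
      using h(1) h'(1) unfolding space_def by (intro graft_domains.vee_prime_graft[OF domains]) auto
    ultimately show ?thesis
      unfolding space_def cseq_eq by blast
  qed
  have "M \<subseteq> joins \<Theta>h"
    using maxExt_subset_joins maxExt_h by blast
  then show "joins (cseq \<Theta>h \<Theta>h') = graft (joins \<Theta>h) M (\<lambda>k. joins (\<Theta>h' k))"
    unfolding cseq_eq by (rule graft_domains.joins_graft[OF domains])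
qed

lemma CC_cseqE:
  assumes "T \<in> CC (cseq \<Theta> \<Theta>')"
  obtains \<Theta>h \<Theta>h' where "T = cseq \<Theta>h \<Theta>h'" "\<Theta>h \<in> CC \<Theta>" "\<And>k. k \<in> M \<Longrightarrow> \<Theta>h' k \<in> CC (\<Theta>' k)"
proof -
  have T: "space T" "minimal_cc_family (cseq \<Theta> \<Theta>') (joins T)"
    using assms CC_eq_minimal_cc_families[OF empty_notin_if_space[OF space_cseq]] by auto
  define \<Theta>h where "\<Theta>h = join_irreducibles (base (joins T))"
  define \<Theta>h' where "\<Theta>h' k = join_irreducibles (continuation (joins T) k)" for k
  have h: "space \<Theta>h" "joins \<Theta>h = base (joins T)"
    unfolding \<Theta>h_def using minimal_cc_familyD(1)[OF minimal_cc_family_base[OF T(2)]]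
      space_join_irreducibles joins_join_irreducibles unfolding cc_family_def by auto
  have h': "space (\<Theta>h' k)" "joins (\<Theta>h' k) = continuation (joins T) k" if "k \<in> M" for k
    unfolding \<Theta>h'_def using minimal_cc_familyD(1)[OF minimal_cc_family_continuation[OF T(2) that]]
      space_join_irreducibles joins_join_irreducibles unfolding cc_family_def by auto
  have CC_h: "\<Theta>h \<in> CC \<Theta>"
    using h minimal_cc_family_base[OF T(2)] CC_eq_minimal_cc_families[OF empty_notin_if_space[OF space]]
    by simp
  have CC_h': "\<Theta>h' k \<in> CC (\<Theta>' k)" if "k \<in> M" for k
    using h'[OF that] minimal_cc_family_continuation[OF T(2) that]
      CC_eq_minimal_cc_families[OF empty_notin_if_space[OF space'[OF that]]] by simp
  have "joins (cseq \<Theta>h \<Theta>h') = graft (joins \<Theta>h) M (\<lambda>k. joins (\<Theta>h' k))"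
    by (rule cseq_of_CC(2)[OF CC_h CC_h'])
  also have "\<dots> = graft (base (joins T)) M (continuation (joins T))"
    unfolding h(2) by (rule graft_cong) (simp add: h'(2))
  also have "\<dots> = joins T"
    using graft_base_continuation stratified_part_if_minimal[OF T(2)] by simp
  finally have "T = cseq \<Theta>h \<Theta>h'"
    using space_eq_if_joins_eq[OF T(1) cseq_of_CC(1)[OF CC_h CC_h']] by simp
  then show ?thesis
    using that CC_h CC_h' by blast
qed

lemma cseq_mem_CC:
  assumes CC_h: "\<Theta>h \<in> CC \<Theta>" and CC_h': "\<And>k. k \<in> M \<Longrightarrow> \<Theta>h' k \<in> CC (\<Theta>' k)"
  shows "cseq \<Theta>h \<Theta>h' \<in> CC (cseq \<Theta> \<Theta>')"
proof -
  have "minimal_cc_family \<Theta> (joins \<Theta>h)"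
    using CC_h CC_eq_minimal_cc_families[OF empty_notin_if_space[OF space]] by auto
  moreover have "minimal_cc_family (\<Theta>' k) (joins (\<Theta>h' k))" if "k \<in> M" for k
    using CC_h'[OF that] CC_eq_minimal_cc_families[OF empty_notin_if_space[OF space'[OF that]]] by auto
  ultimately have "minimal_cc_family (cseq \<Theta> \<Theta>') (graft (joins \<Theta>h) M (\<lambda>k. joins (\<Theta>h' k)))"
    by (rule minimal_cc_family_graft)
  then show ?thesis
    using cseq_of_CC[OF CC_h CC_h'] CC_eq_minimal_cc_families[OF empty_notin_if_space[OF space_cseq]]
    by simp
qed

theorem CC_cseq:
  "CC (cseq \<Theta> \<Theta>') = {cseq \<Theta>h \<Theta>h' | \<Theta>h \<Theta>h'. \<Theta>h \<in> CC \<Theta> \<and> (\<forall>k\<in>M. \<Theta>h' k \<in> CC (\<Theta>' k))}"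
proof (intro equalityI subsetI)
  fix T assume "T \<in> CC (cseq \<Theta> \<Theta>')"
  then show "T \<in> {cseq \<Theta>h \<Theta>h' | \<Theta>h \<Theta>h'. \<Theta>h \<in> CC \<Theta> \<and> (\<forall>k\<in>M. \<Theta>h' k \<in> CC (\<Theta>' k))}"
  proof (rule CC_cseqE)
    fix \<Theta>h \<Theta>h' assume "T = cseq \<Theta>h \<Theta>h'" "\<Theta>h \<in> CC \<Theta>" "\<And>k. k \<in> M \<Longrightarrow> \<Theta>h' k \<in> CC (\<Theta>' k)"
    then show ?thesis
      by (intro CollectI exI[of _ \<Theta>h] exI[of _ \<Theta>h'] conjI) auto
  qed
next
  fix T assume "T \<in> {cseq \<Theta>h \<Theta>h' | \<Theta>h \<Theta>h'. \<Theta>h \<in> CC \<Theta> \<and> (\<forall>k\<in>M. \<Theta>h' k \<in> CC (\<Theta>' k))}"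
  then show "T \<in> CC (cseq \<Theta> \<Theta>')"
    using cseq_mem_CC by auto
qed

end

theorem theorem2:
  fixes \<Theta> :: "('e \<rightharpoonup> 'v) set"
    and \<Theta>' :: "('e \<rightharpoonup> 'v) \<Rightarrow> ('e \<rightharpoonup> 'v) set"
  assumes "space \<Theta>" and "free_choice \<Theta>"
    and "\<And>k. k \<in> maxExt \<Theta> \<Longrightarrow> space (\<Theta>' k)"
    and "\<And>k. k \<in> maxExt \<Theta> \<Longrightarrow> free_choice (\<Theta>' k)"
    and "\<And>k. k \<in> maxExt \<Theta> \<Longrightarrow> events \<Theta> \<inter> events (\<Theta>' k) = {}"
    and "\<And>k1 k2. k1 \<in> maxExt \<Theta> \<Longrightarrow> k2 \<in> maxExt \<Theta> \<Longrightarrow>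
           events (\<Theta>' k1) = events (\<Theta>' k2) \<and>
           (\<forall>\<omega>\<in>events (\<Theta>' k1). inputs (\<Theta>' k1) \<omega> = inputs (\<Theta>' k2) \<omega>)"
  shows "CC (cseq \<Theta> \<Theta>') =
         {cseq \<Theta>h \<Theta>h' | \<Theta>h \<Theta>h'. \<Theta>h \<in> CC \<Theta> \<and> (\<forall>k\<in>maxExt \<Theta>. \<Theta>h' k \<in> CC (\<Theta>' k))}"
proof -
  interpret sequential_composition \<Theta> \<Theta>'
    using assms by unfold_locales
  show ?thesis
    by (rule CC_cseq)
qed

end
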